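(* Let $\pi:\mathcal{A}(\mathbb{C}P^2_q)\to\mathcal{B}(\mathcal{H})$ be a $*$-representation by bounded operators on a Hilbert space with $\ker\pi(p_{11})=\{0\}$. Then there exist bounded operators $Z_1,Z_2,Z_3$ on $\mathcal{H}$ with $Z_1$ positive and $\ker Z_1=\{0\}$ such that $$\big(\pi(p_{ij})\big)_{i,j}=\begin{pmatrix}Z_1^2&qZ_2Z_1&qZ_3Z_1\\ qZ_1Z_2^*&Z_2^*Z_2&Z_2^*Z_3\\ qZ_1Z_3^*&Z_3^*Z_2&Z_3^*Z_3\end{pmatrix},$$ the assignment $\tilde\pi(z_i):=Z_i$ extends to a $*$-representation $\tilde\pi:\mathcal{A}(S^5_q)\to\mathcal{B}(\mathcal{H})$, $\tilde\pi(z_i^*z_j)=\pi(p_{ij})$ for all $i,j$ (so $\tilde\pi$ restricts to $\pi$ on $\mathcal{A}(\mathbb{C}P^2_q)$), and $\tilde\pi$ is irreducible whenever $\pi$ is irreducible.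
   Context: Fix $0<q<1$. $\mathcal{A}(S^5_q)$ is the unital $*$-algebra generated by $z_1,z_2,z_3$ and adjoints with relations $z_iz_j=qz_jz_i$ ($i<j$), $z_i^*z_j=qz_jz_i^*$ ($i\ne j$), $[z_1^*,z_1]=0$, $[z_2^*,z_2]=(1-q^2)z_1z_1^*$, $[z_3^*,z_3]=(1-q^2)(z_1z_1^*+z_2z_2^* )$, $z_1z_1^*+z_2z_2^*+z_3z_3^*=1$. $\mathcal{A}(\mathbb{C}P^2_q)$ is the unital $*$-subalgebra generated by $p_{ij}:=z_i^*z_j$, $i,j=1,2,3$. Representations are unital $*$-representations. *)

theory Defs
  imports "HOL-Analysis.Analysis"
begin

text \<open>A complex Hilbert space is modelled as a real Hilbert space (type class
  real_inner + complete_space) together with an orthogonal complex structure J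
  (multiplication by the imaginary unit).\<close>

definition cstruct :: "('h::real_inner \<Rightarrow> 'h) \<Rightarrow> bool" where
  "cstruct J \<longleftrightarrow> linear J \<and> (\<forall>x. J (J x) = - x) \<and> (\<forall>x y. inner (J x) (J y) = inner x y)"

text \<open>Complex inner product, conjugate-linear in the first, linear in the second argument.\<close>
definition cinner :: "('h::real_inner \<Rightarrow> 'h) \<Rightarrow> 'h \<Rightarrow> 'h \<Rightarrow> complex" where
  "cinner J x y = Complex (inner x y) (- inner x (J y))"

definition cbounded :: "('h::real_normed_vector \<Rightarrow> 'h) \<Rightarrow> ('h \<Rightarrow> 'h) \<Rightarrow> bool" where
  "cbounded J T \<longleftrightarrow> bounded_linear T \<and> (\<forall>x. T (J x) = J (T x))"

definition cscale :: "('h::real_vector \<Rightarrow> 'h) \<Rightarrow> complex \<Rightarrow> ('h \<Rightarrow> 'h) \<Rightarrow> ('h \<Rightarrow> 'h)" where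
  "cscale J c T = (\<lambda>x. Re c *\<^sub>R T x + Im c *\<^sub>R J (T x))"

definition cadj :: "('h::real_inner \<Rightarrow> 'h) \<Rightarrow> ('h \<Rightarrow> 'h) \<Rightarrow> ('h \<Rightarrow> 'h)" where
  "cadj J T = (THE S. \<forall>x y. cinner J (S x) y = cinner J x (T y))"

definition cpositive :: "('h::real_inner \<Rightarrow> 'h) \<Rightarrow> ('h \<Rightarrow> 'h) \<Rightarrow> bool" where
  "cpositive J T \<longleftrightarrow> (\<forall>x. Im (cinner J x (T x)) = 0 \<and> Re (cinner J x (T x)) \<ge> 0)"

datatype gen = G1 | G2 | G3

fun gnum :: "gen \<Rightarrow> nat" where
  "gnum G1 = 1" | "gnum G2 = 2" | "gnum G3 = 3"

text \<open>A letter (i, False) stands for z_i, (i, True) for z_i^*.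
  A polynomial is a finitely supported function from words to complex coefficients.\<close>
type_synonym letter = "gen \<times> bool"
type_synonym poly = "letter list \<Rightarrow> complex"

definition fsupp :: "poly \<Rightarrow> bool" where
  "fsupp f \<longleftrightarrow> finite {w. f w \<noteq> 0}"

definition polys :: "poly set" where
  "polys = {f. fsupp f}"

definition mon :: "letter list \<Rightarrow> poly" where
  "mon w = (\<lambda>v. if v = w then 1 else 0)"

definition pone :: poly where "pone = mon []"

definition padd :: "poly \<Rightarrow> poly \<Rightarrow> poly" where
  "padd f g = (\<lambda>w. f w + g w)"

definition psc :: "complex \<Rightarrow> poly \<Rightarrow> poly" where
  "psc c f = (\<lambda>w. c * f w)"

definition pdiff :: "poly \<Rightarrow> poly \<Rightarrow> poly" where
  "pdiff f g = (\<lambda>w. f w - g w)"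

definition pmul :: "poly \<Rightarrow> poly \<Rightarrow> poly" where
  "pmul f g = (\<lambda>w. \<Sum>k\<le>length w. f (take k w) * g (drop k w))"

definition wstar :: "letter list \<Rightarrow> letter list" where
  "wstar w = rev (map (\<lambda>(i, b). (i, \<not> b)) w)"

definition pstar :: "poly \<Rightarrow> poly" where
  "pstar f = (\<lambda>w. cnj (f (wstar w)))"

definition z :: "gen \<Rightarrow> poly" where "z i = mon [(i, False)]"
definition zs :: "gen \<Rightarrow> poly" where "zs i = mon [(i, True)]"

text \<open>The generators p_ij = z_i^* z_j of A(CP^2_q), as elements of the free algebra.\<close>
definition p :: "gen \<Rightarrow> gen \<Rightarrow> poly" where "p i j = mon [(i, True), (j, False)]"

section \<open>Defining relations of A(S^5_q) (each relation r means r = 0)\<close>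

definition comm :: "poly \<Rightarrow> poly \<Rightarrow> poly" where
  "comm a b = pdiff (pmul a b) (pmul b a)"

definition S5_rels :: "real \<Rightarrow> poly set" where
  "S5_rels q =
     {pdiff (pmul (z i) (z j)) (psc (of_real q) (pmul (z j) (z i))) | i j. gnum i < gnum j}
   \<union> {pdiff (pmul (zs i) (z j)) (psc (of_real q) (pmul (z j) (zs i))) | i j. i \<noteq> j}
   \<union> {comm (zs G1) (z G1),
      pdiff (comm (zs G2) (z G2)) (psc (of_real (1 - q\<^sup>2)) (pmul (z G1) (zs G1))),
      pdiff (comm (zs G3) (z G3))
        (psc (of_real (1 - q\<^sup>2)) (padd (pmul (z G1) (zs G1)) (pmul (z G2) (zs G2)))),
      pdiff (padd (padd (pmul (z G1) (zs G1)) (pmul (z G2) (zs G2))) (pmul (z G3) (zs G3))) pone}"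

text \<open>The two-sided *-ideal of the free *-algebra generated by the relations.
  A(S^5_q) is the quotient polys / S5_ideal q.\<close>
inductive_set S5_ideal :: "real \<Rightarrow> poly set" for q :: real where
  rel: "r \<in> S5_rels q \<Longrightarrow> r \<in> S5_ideal q"
| add: "f \<in> S5_ideal q \<Longrightarrow> g \<in> S5_ideal q \<Longrightarrow> padd f g \<in> S5_ideal q"
| sc: "f \<in> S5_ideal q \<Longrightarrow> psc c f \<in> S5_ideal q"
| lmul: "f \<in> S5_ideal q \<Longrightarrow> fsupp g \<Longrightarrow> pmul g f \<in> S5_ideal q"
| rmul: "f \<in> S5_ideal q \<Longrightarrow> fsupp g \<Longrightarrow> pmul f g \<in> S5_ideal q"
| star: "f \<in> S5_ideal q \<Longrightarrow> pstar f \<in> S5_ideal q"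

text \<open>Representatives of A(CP^2_q): the unital *-subalgebra of the free algebra generated
  by the p_ij; its image in A(S^5_q) is A(CP^2_q).\<close>
inductive_set CP2_alg :: "poly set" where
  one: "pone \<in> CP2_alg"
| gen: "p i j \<in> CP2_alg"
| add: "f \<in> CP2_alg \<Longrightarrow> g \<in> CP2_alg \<Longrightarrow> padd f g \<in> CP2_alg"
| sc: "f \<in> CP2_alg \<Longrightarrow> psc c f \<in> CP2_alg"
| mul: "f \<in> CP2_alg \<Longrightarrow> g \<in> CP2_alg \<Longrightarrow> pmul f g \<in> CP2_alg"
| star: "f \<in> CP2_alg \<Longrightarrow> pstar f \<in> CP2_alg"

text \<open>A unital *-representation, by bounded operators on the Hilbert space, of the
  *-subalgebra of A(S^5_q) represented by the (representative) set D: it is a map on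
  representatives that is well defined modulo the ideal, linear, multiplicative,
  unital and *-preserving.\<close>
definition star_rep :: "('h::real_inner \<Rightarrow> 'h) \<Rightarrow> real \<Rightarrow> poly set \<Rightarrow> (poly \<Rightarrow> 'h \<Rightarrow> 'h) \<Rightarrow> bool" where
  "star_rep J q D \<pi> \<longleftrightarrow>
     (\<forall>f\<in>D. cbounded J (\<pi> f))
   \<and> (\<forall>f\<in>D. \<forall>g\<in>D. pdiff f g \<in> S5_ideal q \<longrightarrow> \<pi> f = \<pi> g)
   \<and> \<pi> pone = id
   \<and> (\<forall>f\<in>D. \<forall>g\<in>D. \<pi> (padd f g) = (\<lambda>x. \<pi> f x + \<pi> g x))
   \<and> (\<forall>f\<in>D. \<forall>c. \<pi> (psc c f) = cscale J c (\<pi> f))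
   \<and> (\<forall>f\<in>D. \<forall>g\<in>D. \<pi> (pmul f g) = \<pi> f \<circ> \<pi> g)
   \<and> (\<forall>f\<in>D. \<pi> (pstar f) = cadj J (\<pi> f))"

definition irreducible_rep :: "('h::real_inner \<Rightarrow> 'h) \<Rightarrow> poly set \<Rightarrow> (poly \<Rightarrow> 'h \<Rightarrow> 'h) \<Rightarrow> bool" where
  "irreducible_rep J D \<pi> \<longleftrightarrow>
     (\<forall>V. closed V \<and> subspace V \<and> J ` V \<subseteq> V \<and> (\<forall>f\<in>D. \<pi> f ` V \<subseteq> V)
          \<longrightarrow> V = {0} \<or> V = UNIV)"

end

theory Submission
  imports Defs
begin

(* The relations of A(S^5_q) imply relations among the p_ij (proved below by explicit ideal
   certificates), e.g. p11 = p11^2 + p12 p21 + p13 p31 and p21 p12 = q^2 p11 p22.  The first gives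
   |T11 x|^2 <= <x, T11 x> for T_ij = pi(p_ij), so T11 has a positive square root Z1, constructed
   from the binomial series of sqrt(1 - B) with B = 1 - T11; Z1 is injective with dense range.
   For k = 2, 3 the estimate |T1k x|^2 = q^2 <Z1 x, Tkk Z1 x> <= C |Z1 x|^2 defines Zk on the range
   of Z1 by Zk (Z1 x) = q^-1 T1k x, extended by continuity.  The S^5_q relations for Z1, Z2, Z3
   follow from those of CP^2_q by cancelling Z1 or T11 on the right (both have dense range), and
   any operator family satisfying them defines a *-representation of the free *-algebra that
   vanishes on the ideal of A(S^5_q). *)

lemma cstruct_linear: "cstruct J \<Longrightarrow> linear J"
  by (simp add: cstruct_def)

lemma cstruct_JJ [simp]: "cstruct J \<Longrightarrow> J (J x) = - x"
  by (simp add: cstruct_def)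

lemma cstruct_inner: "cstruct J \<Longrightarrow> inner (J x) (J y) = inner x y"
  by (simp add: cstruct_def)

lemma cstruct_skew:
  assumes J: "cstruct J" shows "inner (J x) y = - inner x (J y)"
proof -
  have "inner (J x) y = inner (J (J x)) (J y)" using cstruct_inner[OF J] by simp
  also have "\<dots> = - inner x (J y)" using J by simp
  finally show ?thesis .
qed

lemma cstruct_bounded_linear:
  assumes J: "cstruct J" shows "bounded_linear J"
proof (rule bounded_linear_intro[where K = 1])
  show "J (x + y) = J x + J y" "J (r *\<^sub>R x) = r *\<^sub>R J x" for x y r
    using cstruct_linear[OF J] by (simp_all add: linear_add linear_scale)
  show "norm (J x) \<le> norm x * 1" for x
    by (simp add: norm_eq_sqrt_inner cstruct_inner[OF J])
qed

lemma cstruct_add: "cstruct J \<Longrightarrow> J (a + b) = J a + J b"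
  using cstruct_linear linear_add by metis
lemma cstruct_scale: "cstruct J \<Longrightarrow> J (r *\<^sub>R a) = r *\<^sub>R J a"
  using cstruct_linear linear_scale by metis
lemma cstruct_zero: "cstruct J \<Longrightarrow> J 0 = 0"
  using cstruct_linear linear_0 by metis

definition csm :: "('h::real_inner \<Rightarrow> 'h) \<Rightarrow> complex \<Rightarrow> 'h \<Rightarrow> 'h" where
  "csm J c v = Re c *\<^sub>R v + Im c *\<^sub>R J v"

lemma cscale_csm: "cscale J c T x = csm J c (T x)"
  by (simp add: cscale_def csm_def)
lemma csm_add_scalar: "csm J (a + b) v = csm J a v + csm J b v"
  by (simp add: csm_def algebra_simps)
lemma csm_sum_scalar: "csm J (\<Sum>i\<in>S. c i) v = (\<Sum>i\<in>S. csm J (c i) v)"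
  by (simp add: csm_def scaleR_sum_left sum.distrib)
lemma csm_zero_scalar [simp]: "csm J 0 v = 0"
  by (simp add: csm_def)
lemma csm_of_real: "csm J (of_real r) v = r *\<^sub>R v"
  by (simp add: csm_def)
lemma csm_sum_vector: "cstruct J \<Longrightarrow> csm J c (\<Sum>i\<in>S. v i) = (\<Sum>i\<in>S. csm J c (v i))"
  by (simp add: csm_def linear_sum[OF cstruct_linear] scaleR_sum_right sum.distrib)
lemma csm_mult: "cstruct J \<Longrightarrow> csm J (c * d) v = csm J c (csm J d v)"
  by (simp add: csm_def cstruct_add cstruct_scale algebra_simps)
lemma inner_csm: "cstruct J \<Longrightarrow> inner (csm J (cnj c) v) w = inner v (csm J c w)"
  by (simp add: csm_def inner_add inner_diff_left cstruct_skew)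

lemma cbounded_bounded_linear: "cbounded J T \<Longrightarrow> bounded_linear T"
  by (simp add: cbounded_def)

lemma cbounded_comp: "cbounded J S \<Longrightarrow> cbounded J T \<Longrightarrow> cbounded J (\<lambda>x. S (T x))"
  unfolding cbounded_def by (auto intro: bounded_linear_compose)

lemma cbounded_id: "cbounded J (\<lambda>x. x)"
  unfolding cbounded_def by (simp add: bounded_linear_ident)

lemma cbounded_add: "cstruct J \<Longrightarrow> cbounded J S \<Longrightarrow> cbounded J T \<Longrightarrow> cbounded J (\<lambda>x. S x + T x)"
  unfolding cbounded_def by (auto simp: cstruct_add intro: bounded_linear_add)

lemma cbounded_scaleR: "cstruct J \<Longrightarrow> cbounded J T \<Longrightarrow> cbounded J (\<lambda>x. r *\<^sub>R T x)"
  unfolding cbounded_def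
  by (auto simp: cstruct_scale intro: bounded_linear_compose[OF bounded_linear_scaleR_right])

lemma cbounded_zero: "cstruct J \<Longrightarrow> cbounded J (\<lambda>x. 0)"
  unfolding cbounded_def by (auto simp: cstruct_zero intro: bounded_linear_zero)

lemma cbounded_J: "cstruct J \<Longrightarrow> cbounded J J"
  unfolding cbounded_def using cstruct_bounded_linear by auto

lemma cbounded_cscale: "cstruct J \<Longrightarrow> cbounded J T \<Longrightarrow> cbounded J (cscale J c T)"
  unfolding cscale_def by (intro cbounded_add cbounded_scaleR cbounded_comp[OF cbounded_J]) auto

lemma cbounded_sum:
  assumes J: "cstruct J" and "finite S" and "\<And>i. i \<in> S \<Longrightarrow> cbounded J (T i)"
  shows "cbounded J (\<lambda>x. \<Sum>i\<in>S. T i x)"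
  using assms(2,3)
  by (induction S rule: finite_induct) (simp_all add: cbounded_zero[OF J] cbounded_add[OF J])

lemma cbounded_csm: "cstruct J \<Longrightarrow> cbounded J S \<Longrightarrow> S (csm J c v) = csm J c (S v)"
  unfolding csm_def cbounded_def
  by (simp add: linear_add[OF bounded_linear.linear] linear_scale[OF bounded_linear.linear])

section \<open>Hilbert space tools\<close>

lemma quadratic_nonneg_imp_linear_zero:
  fixes a b :: real
  assumes "b \<ge> 0" and "\<And>t. 0 \<le> - 2 * t * a + t^2 * b"
  shows "a = 0"
proof -
  have "- 2 * (a/(b+1)) * a + (a/(b+1))^2 * b = - (a^2 * (b + 2)) / (b+1)^2"
    using assms(1) by (simp add: divide_simps power2_eq_square) (simp add: algebra_simps)
  hence "0 \<le> - (a^2 * (b + 2)) / (b+1)^2" using assms(2)[of "a/(b+1)"] by simp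
  hence "a^2 * (b + 2) \<le> 0" using assms(1) by (simp add: divide_le_0_iff)
  hence "a^2 \<le> 0" using assms(1)
    by (metis add_nonneg_pos mult_le_0_iff not_le zero_le_power2 zero_less_numeral)
  thus ?thesis by simp
qed

text \<open>A minimising sequence for the distance from y to a subspace is Cauchy, by the
  parallelogram law applied to y - ms k and y - ms l.\<close>
lemma minimising_sequence_Cauchy:
  fixes M :: "'h::real_inner set"
  assumes sub: "subspace M" and ms: "\<And>n. ms n \<in> M" "\<And>n. norm (y - ms n)^2 < d + 1 / Suc n"
    and dle: "\<And>m. m \<in> M \<Longrightarrow> d \<le> norm (y - m)^2"
  shows "Cauchy ms"
proof (rule CauchyI)
  have parallelogram: "norm (ms k - ms l)^2 \<le> 2 / Suc k + 2 / Suc l" for k l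
  proof -
    have mid: "(ms k + ms l) /\<^sub>R 2 \<in> M" using ms sub by (simp add: subspace_add subspace_scale)
    have "(y - ms k) + (y - ms l) = 2 *\<^sub>R (y - (ms k + ms l) /\<^sub>R 2)"
      by (simp add: algebra_simps scaleR_2)
    hence "norm ((y - ms k) + (y - ms l))^2 = 4 * norm (y - (ms k + ms l) /\<^sub>R 2)^2"
      by (simp add: power2_eq_square)
    hence "norm ((y - ms k) + (y - ms l))^2 \<ge> 4 * d" using dle[OF mid] by simp
    moreover have "norm (ms k - ms l)^2 + norm ((y - ms k) + (y - ms l))^2
        = 2 * norm (y - ms k)^2 + 2 * norm (y - ms l)^2"
      by (simp add: power2_norm_eq_inner inner_add inner_diff inner_commute algebra_simps)
    ultimately show ?thesis using ms(2)[of k] ms(2)[of l] by linarith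
  qed
  fix e :: real assume e: "e > 0"
  obtain N :: nat where N: "4 / e^2 < N" using reals_Archimedean2 by blast
  have "norm (ms m - ms n) < e" if "N \<le> m" "N \<le> n" for m n
  proof -
    have "4/e^2 < Suc m" "4/e^2 < Suc n" using N that by linarith+
    hence "2 / Suc m < e^2/2" "2 / Suc n < e^2/2" using e by (auto simp: field_simps)
    hence "norm (ms m - ms n)^2 < e^2" using parallelogram[of m n] by linarith
    thus ?thesis using e
      by (meson abs_le_square_iff abs_norm_cancel less_le_not_le not_le power_less_imp_less_base)
  qed
  thus "\<exists>M. \<forall>m\<ge>M. \<forall>n\<ge>M. norm (ms m - ms n) < e" by blast
qed

text \<open>In a Hilbert space, every vector has a closest point in a closed subspace: the limit of a
  minimising sequence.\<close>
lemma closest_point_in_subspace: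
  fixes M :: "'h::{real_inner,complete_space} set"
  assumes cl: "closed M" and sub: "subspace M"
  shows "\<exists>p\<in>M. \<forall>m\<in>M. norm (y - p)^2 \<le> norm (y - m)^2"
proof -
  define d where "d = Inf ((\<lambda>m. norm (y - m)^2) ` M)"
  have M0: "0 \<in> M" using sub by (simp add: subspace_0)
  have dle: "d \<le> norm (y - m)^2" if "m \<in> M" for m
    unfolding d_def using that by (auto intro!: cInf_lower bdd_belowI[where m = 0])
  have "\<exists>m\<in>M. norm (y - m)^2 < d + e" if "e > 0" for e
  proof -
    have "Inf ((\<lambda>m. norm (y - m)^2) ` M) < d + e" using that d_def by simp
    then show ?thesis using M0 by (subst (asm) cInf_less_iff) (auto intro: bdd_belowI[where m = 0])
  qed
  hence "\<forall>n. \<exists>m\<in>M. norm (y - m)^2 < d + 1 / Suc n" by simp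
  then obtain ms where ms: "\<And>n. ms n \<in> M" "\<And>n. norm (y - ms n)^2 < d + 1 / Suc n"
    by metis
  obtain p where lim: "ms \<longlonglongrightarrow> p"
    using minimising_sequence_Cauchy[OF sub ms dle] Cauchy_convergent_iff convergent_def by blast
  have pM: "p \<in> M" using cl ms(1) lim closed_sequentially by blast
  have "(\<lambda>n. norm (y - ms n)^2) \<longlonglongrightarrow> norm (y - p)^2"
    by (intro tendsto_intros lim)
  moreover have "(\<lambda>n. d + 1 / real (Suc n)) \<longlonglongrightarrow> d + 0"
    by (intro tendsto_intros LIMSEQ_inverse_real_of_nat[unfolded inverse_eq_divide])
  ultimately have "norm (y - p)^2 \<le> d"
    using ms(2) by (intro LIMSEQ_le[of "\<lambda>n. norm (y - ms n)^2" _ "\<lambda>n. d + 1 / Suc n"])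
                   (auto intro: less_imp_le)
  thus ?thesis using pM dle by (meson order_trans)
qed

lemma orthogonal_projection_exists:
  fixes M :: "'h::{real_inner,complete_space} set"
  assumes cl: "closed M" and sub: "subspace M"
  shows "\<exists>p\<in>M. \<forall>m\<in>M. inner (y - p) m = 0"
proof -
  obtain p where pM: "p \<in> M" and min: "\<And>m. m \<in> M \<Longrightarrow> norm (y - p)^2 \<le> norm (y - m)^2"
    using closest_point_in_subspace[OF cl sub] by blast
  show ?thesis
  proof (intro bexI[OF _ pM] ballI)
    fix m assume m: "m \<in> M"
    show "inner (y - p) m = 0"
    proof (rule quadratic_nonneg_imp_linear_zero[where b = "inner m m"])
      fix t
      have "p + t *\<^sub>R m \<in> M" using pM m sub by (simp add: subspace_add subspace_scale)
      hence "norm (y - p)^2 \<le> norm (y - (p + t *\<^sub>R m))^2" by (rule min)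
      also have "\<dots> = norm (y - p)^2 - 2 * t * inner (y - p) m + t^2 * inner m m"
        by (simp only: power2_norm_eq_inner)
           (simp add: inner_diff inner_add inner_commute algebra_simps power2_eq_square)
      finally show "0 \<le> - 2 * t * inner (y - p) m + t^2 * inner m m" by simp
    qed simp
  qed
qed

text \<open>Riesz: a bounded linear functional is the inner product with a fixed vector, namely a
  suitable multiple of the component of any vector orthogonal to its kernel.\<close>
lemma riesz_representation:
  fixes f :: "'h::{real_inner,complete_space} \<Rightarrow> real"
  assumes bl: "bounded_linear f"
  shows "\<exists>v. \<forall>x. f x = inner v x"
proof (cases "\<forall>x. f x = 0")
  case True thus ?thesis by (intro exI[of _ 0]) simp
next
  case False
  then obtain u where u: "f u \<noteq> 0" by blast
  have lin: "linear f" using bl by (rule bounded_linear.linear)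
  define K where "K = {x. f x = 0}"
  have "closed K" unfolding K_def
    using bl by (intro closed_Collect_eq) (auto intro: linear_continuous_on continuous_intros)
  moreover have "subspace K" unfolding K_def subspace_def
    using lin by (simp add: linear_add linear_scale linear_0)
  ultimately obtain p where pK: "p \<in> K" and orth: "\<forall>m\<in>K. inner (u - p) m = 0"
    using orthogonal_projection_exists by blast
  define w where "w = u - p"
  have fw: "f w = f u" using pK lin unfolding w_def K_def by (simp add: linear_diff)
  hence "w \<noteq> 0" using u lin by (auto simp: linear_0)
  hence ww: "inner w w \<noteq> 0" by simp
  show ?thesis
  proof (intro exI allI)
    fix x
    have "x - (f x / f w) *\<^sub>R w \<in> K" unfolding K_def using lin fw u by (simp add: linear_diff linear_scale)
    hence "inner w (x - (f x / f w) *\<^sub>R w) = 0" using orth w_def by simp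
    hence "inner w x = f x / f w * inner w w" by (simp add: inner_diff_right)
    thus "f x = inner ((f w / inner w w) *\<^sub>R w) x" using ww fw u by (simp add: field_simps)
  qed
qed

definition is_adjoint :: "('h::real_inner \<Rightarrow> 'h) \<Rightarrow> ('h \<Rightarrow> 'h) \<Rightarrow> bool" where
  "is_adjoint S T \<longleftrightarrow> (\<forall>x y. inner (S x) y = inner x (T y))"

lemma vector_eq_by_inner: "(\<And>y. inner u y = inner v y) \<Longrightarrow> u = v"
  by (metis inner_diff_left inner_eq_zero_iff right_minus_eq)

lemma is_adjoint_unique:
  assumes "is_adjoint S T" "is_adjoint S' T" shows "S = S'"
proof (rule ext, rule vector_eq_by_inner)
  show "inner (S x) y = inner (S' x) y" for x y using assms by (simp add: is_adjoint_def)
qed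

lemma is_adjoint_sym: "is_adjoint S T \<Longrightarrow> is_adjoint T S"
  unfolding is_adjoint_def by (metis inner_commute)

lemma is_adjoint_comp: "is_adjoint S T \<Longrightarrow> is_adjoint S' T' \<Longrightarrow> is_adjoint (S' \<circ> S) (T \<circ> T')"
  unfolding is_adjoint_def by simp

lemma is_adjoint_bounded_linear:
  fixes T :: "'h::real_inner \<Rightarrow> 'h"
  assumes adj: "is_adjoint S T" and bl: "bounded_linear T"
  shows "bounded_linear S"
proof -
  have add: "S (a + b) = S a + S b" for a b
    by (rule vector_eq_by_inner) (use adj in \<open>simp add: is_adjoint_def inner_add_left inner_add_right\<close>)
  have scale: "S (r *\<^sub>R a) = r *\<^sub>R S a" for r a
    by (rule vector_eq_by_inner) (use adj in \<open>simp add: is_adjoint_def\<close>)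
  obtain K where K: "\<And>x. norm (T x) \<le> norm x * K" "K > 0"
    using bounded_linear.pos_bounded[OF bl] by blast
  have "norm (S x) \<le> norm x * K" for x
  proof -
    have "norm (S x)^2 = inner x (T (S x))" using adj unfolding is_adjoint_def
      by (simp add: power2_norm_eq_inner)
    also have "\<dots> \<le> norm x * norm (T (S x))" using norm_cauchy_schwarz by blast
    also have "\<dots> \<le> norm x * (norm (S x) * K)" using K(1) by (simp add: mult_left_mono)
    finally have "norm (S x) * norm (S x) \<le> norm (S x) * (norm x * K)"
      by (simp add: power2_eq_square algebra_simps)
    thus ?thesis using K(2) by (cases "S x = 0") auto
  qed
  thus ?thesis by (rule bounded_linear_intro[OF add scale])
qed

text \<open>Every bounded operator on a Hilbert space has an adjoint (by Riesz); we fix one by choice.\<close>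
definition adj :: "('h::real_inner \<Rightarrow> 'h) \<Rightarrow> 'h \<Rightarrow> 'h" where
  "adj T = (SOME S. is_adjoint S T)"

lemma adj_is_adjoint:
  fixes T :: "'h::{real_inner,complete_space} \<Rightarrow> 'h"
  assumes "bounded_linear T" shows "is_adjoint (adj T) T"
proof -
  have "\<exists>v. \<forall>y. inner x (T y) = inner v y" for x
    by (rule riesz_representation) (intro bounded_linear_compose[OF bounded_linear_inner_right assms])
  then obtain S where "\<And>x y. inner x (T y) = inner (S x) y" by metis
  hence "\<exists>S. is_adjoint S T" unfolding is_adjoint_def by metis
  thus ?thesis unfolding adj_def by (rule someI_ex)
qed

lemma adj_eq: "bounded_linear (T::'h::{real_inner,complete_space} \<Rightarrow> 'h) \<Longrightarrow> is_adjoint S T \<Longrightarrow> adj T = S"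
  by (erule is_adjoint_unique[OF adj_is_adjoint])

lemma adj_bounded_linear:
  "bounded_linear (T::'h::{real_inner,complete_space} \<Rightarrow> 'h) \<Longrightarrow> bounded_linear (adj T)"
  by (rule is_adjoint_bounded_linear[OF adj_is_adjoint])

lemma adj_adj: "bounded_linear (T::'h::{real_inner,complete_space} \<Rightarrow> 'h) \<Longrightarrow> adj (adj T) = T"
  by (rule adj_eq[OF adj_bounded_linear is_adjoint_sym[OF adj_is_adjoint]])

lemma adj_inner:
  "bounded_linear (T::'h::{real_inner,complete_space} \<Rightarrow> 'h) \<Longrightarrow> inner (adj T x) y = inner x (T y)"
  using adj_is_adjoint unfolding is_adjoint_def by blast

lemma inner_adj:
  "bounded_linear (T::'h::{real_inner,complete_space} \<Rightarrow> 'h) \<Longrightarrow> inner x (adj T y) = inner (T x) y"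
  by (metis adj_inner inner_commute)

lemma adj_swap:
  fixes F G F' G' :: "'h::{real_inner,complete_space} \<Rightarrow> 'h"
  assumes "bounded_linear F" "bounded_linear G" "bounded_linear F'" "bounded_linear G'"
    and "\<And>y. F (G y) = c *\<^sub>R G' (F' y)"
  shows "adj G (adj F x) = c *\<^sub>R adj F' (adj G' x)"
  by (rule vector_eq_by_inner) (simp add: adj_inner assms)

lemma cbounded_adj:
  fixes T :: "'h::{real_inner,complete_space} \<Rightarrow> 'h"
  assumes J: "cstruct J" and T: "cbounded J T" shows "cbounded J (adj T)"
  unfolding cbounded_def
proof (intro conjI allI)
  have bl: "bounded_linear T" using T by (rule cbounded_bounded_linear)
  show "bounded_linear (adj T)" by (rule adj_bounded_linear[OF bl])
  fix x
  show "adj T (J x) = J (adj T x)"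
  proof (rule vector_eq_by_inner)
    fix y
    have "inner (adj T (J x)) y = - inner x (J (T y))" by (simp add: adj_inner[OF bl] cstruct_skew[OF J])
    also have "\<dots> = - inner x (T (J y))" using T by (simp add: cbounded_def)
    also have "\<dots> = inner (J (adj T x)) y" by (simp add: adj_inner[OF bl] cstruct_skew[OF J])
    finally show "inner (adj T (J x)) y = inner (J (adj T x)) y" .
  qed
qed

lemma cadj_eq_adj:
  fixes T :: "'h::{real_inner,complete_space} \<Rightarrow> 'h"
  assumes J: "cstruct J" and T: "cbounded J T" shows "cadj J T = adj T"
  unfolding cadj_def
proof (rule the_equality)
  have bl: "bounded_linear T" using T by (rule cbounded_bounded_linear)
  show "\<forall>x y. cinner J (adj T x) y = cinner J x (T y)"
    unfolding cinner_def using T by (simp add: adj_inner[OF bl] cbounded_def)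
  fix S assume "\<forall>x y. cinner J (S x) y = cinner J x (T y)"
  hence "is_adjoint S T" unfolding is_adjoint_def cinner_def by (metis complex.inject)
  thus "S = adj T" using adj_eq[OF bl] by simp
qed

lemma closure_subspace:
  fixes S :: "'a::real_normed_vector set"
  assumes "subspace S" shows "subspace (closure S)"
  unfolding subspace_def
proof (intro conjI ballI allI)
  show "0 \<in> closure S" using assms closure_subset subspace_0 by blast
  fix x y assume "x \<in> closure S" "y \<in> closure S"
  then obtain f g where f: "\<And>n. f n \<in> S" "f \<longlonglongrightarrow> x" and g: "\<And>n. g n \<in> S" "g \<longlonglongrightarrow> y"
    unfolding closure_sequential by metis
  have "(\<lambda>n. f n + g n) \<longlonglongrightarrow> x + y" by (intro tendsto_intros f g)
  moreover have "f n + g n \<in> S" for n using f g assms by (simp add: subspace_add)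
  ultimately show "x + y \<in> closure S"
    unfolding closure_sequential by (intro exI[of _ "\<lambda>n. f n + g n"]) simp
next
  fix c :: real and x assume "x \<in> closure S"
  then obtain f where f: "\<And>n. f n \<in> S" "f \<longlonglongrightarrow> x" unfolding closure_sequential by metis
  have "(\<lambda>n. c *\<^sub>R f n) \<longlonglongrightarrow> c *\<^sub>R x" by (intro tendsto_intros f)
  moreover have "c *\<^sub>R f n \<in> S" for n using f assms by (simp add: subspace_scale)
  ultimately show "c *\<^sub>R x \<in> closure S"
    unfolding closure_sequential by (intro exI[of _ "\<lambda>n. c *\<^sub>R f n"]) simp
qed

text \<open>An injective self-adjoint operator has dense range: the orthogonal complement of its range is
  its kernel.\<close>
lemma selfadjoint_injective_dense_range:
  fixes Z :: "'h::{real_inner,complete_space} \<Rightarrow> 'h"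
  assumes bl: "bounded_linear Z" and sa: "is_adjoint Z Z" and inj: "\<And>x. Z x = 0 \<Longrightarrow> x = 0"
  shows "closure (range Z) = UNIV"
proof -
  have sub: "subspace (closure (range Z))"
    by (intro closure_subspace linear_subspace_image[OF bounded_linear.linear[OF bl] subspace_UNIV])
  have "y \<in> closure (range Z)" for y
  proof -
    obtain p where p: "p \<in> closure (range Z)" "\<forall>m\<in>closure (range Z). inner (y - p) m = 0"
      using orthogonal_projection_exists[OF closed_closure sub] by blast
    have "inner (Z (y - p)) x = 0" for x
      using p(2) closure_subset[of "range Z"] sa unfolding is_adjoint_def by auto
    from this[of "Z (y - p)"] have "y = p" using inj[of "y - p"] by simp
    thus ?thesis using p by simp
  qed
  thus ?thesis by auto
qed

lemma continuous_eq_on_dense: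
  fixes f g :: "'a::topological_space \<Rightarrow> 'b::t2_space"
  assumes "closure S = UNIV" "continuous_on UNIV f" "continuous_on UNIV g" "\<And>y. y \<in> S \<Longrightarrow> f y = g y"
  shows "f y = g y"
proof -
  have "closure S \<subseteq> {x. f x = g x}"
    by (rule closure_minimal) (use assms closed_Collect_eq in auto)
  thus ?thesis using assms(1) by auto
qed

lemma eq_on_dense_range:
  fixes F G Z :: "'h::real_normed_vector \<Rightarrow> 'h"
  assumes "closure (range Z) = UNIV" "bounded_linear F" "bounded_linear G" "\<And>x. F (Z x) = G (Z x)"
  shows "F = G"
  using continuous_eq_on_dense[OF assms(1) linear_continuous_on[OF assms(2)] linear_continuous_on[OF assms(3)]]
    assms(4) by blast

text \<open>A continuous map g with g \<circ> Z = R for linear R and Z of dense range is linear (and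
  bounded by K if |R x| \<le> K |Z x|): both identities pass from the dense range to the closure.\<close>
lemma continuous_extension_bounded_linear:
  fixes Z R g :: "'h::real_normed_vector \<Rightarrow> 'h"
  assumes dense: "closure (range Z) = UNIV" and lZ: "linear Z" and lR: "linear R"
    and cg: "continuous_on UNIV g" and gZ: "\<And>x. g (Z x) = R x"
    and K: "\<And>x. norm (R x) \<le> K * norm (Z x)"
  shows "bounded_linear g"
proof (rule bounded_linear_intro)
  have add_Z: "g (Z a + y) = g (Z a) + g y" for a y
    by (rule continuous_eq_on_dense[OF dense, of "\<lambda>y. g (Z a + y)" "\<lambda>y. g (Z a) + g y"])
       (auto intro!: continuous_intros continuous_on_compose2[OF cg]
         simp: gZ linear_add[OF lZ, symmetric] linear_add[OF lR] cg)
  show "g (x + y) = g x + g y" for x y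
    by (rule continuous_eq_on_dense[OF dense, of "\<lambda>x. g (x + y)" "\<lambda>x. g x + g y"])
       (auto intro!: continuous_intros continuous_on_compose2[OF cg] simp: add_Z cg)
  show "g (r *\<^sub>R x) = r *\<^sub>R g x" for r x
    by (rule continuous_eq_on_dense[OF dense, of "\<lambda>x. g (r *\<^sub>R x)" "\<lambda>x. r *\<^sub>R g x"])
       (auto intro!: continuous_intros continuous_on_compose2[OF cg]
         simp: gZ linear_scale[OF lZ, symmetric] linear_scale[OF lR] cg)
  show "norm (g x) \<le> norm x * K" for x
  proof -
    have "closure (range Z) \<subseteq> {x. norm (g x) \<le> norm x * K}"
      using K gZ by (intro closure_minimal closed_Collect_le)
        (auto intro!: continuous_intros continuous_on_compose2[OF cg] simp: cg mult.commute)
    thus ?thesis using dense by auto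
  qed
qed

text \<open>If |R x| \<le> K |Z x| and Z is injective with dense range, then R = W \<circ> Z for a bounded W:
  R \<circ> Z^-1 is uniformly continuous on range Z and extends to its closure.\<close>
lemma extend_by_continuity:
  fixes Z R :: "'h::{real_inner,complete_space} \<Rightarrow> 'h"
  assumes blZ: "bounded_linear Z" and dense: "closure (range Z) = UNIV"
    and inj: "\<And>x. Z x = 0 \<Longrightarrow> x = 0"
    and blR: "bounded_linear R" and K: "\<And>x. norm (R x) \<le> K * norm (Z x)" and K0: "K \<ge> 0"
  shows "\<exists>W. bounded_linear W \<and> (\<forall>x. W (Z x) = R x)"
proof -
  have lZ: "linear Z" and lR: "linear R" using blZ blR by (simp_all add: bounded_linear.linear)
  have "inj Z" by (rule injI) (metis inj linear_diff[OF lZ] eq_iff_diff_eq_0)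
  define f where "f = (\<lambda>y. R (inv Z y))"
  have fZ: "f (Z x) = R x" for x unfolding f_def using \<open>inj Z\<close> by simp
  have "uniformly_continuous_on (range Z) f"
    unfolding uniformly_continuous_on_def
  proof (intro allI impI)
    fix e :: real assume e: "e > 0"
    show "\<exists>d>0. \<forall>x\<in>range Z. \<forall>x'\<in>range Z. dist x' x < d \<longrightarrow> dist (f x') (f x) < e"
    proof (intro exI[of _ "e / (K + 1)"] conjI ballI impI)
      fix y y' assume yy: "y \<in> range Z" "y' \<in> range Z" "dist y' y < e / (K + 1)"
      then obtain a a' where a: "y = Z a" "y' = Z a'" by auto
      have "dist (f y') (f y) \<le> K * dist y' y"
        using a fZ K[of "a' - a"] by (simp add: dist_norm linear_diff[OF lR] linear_diff[OF lZ])
      also have "\<dots> \<le> K * (e / (K + 1))" using yy(3) K0 by (intro mult_left_mono) auto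
      also have "\<dots> < e" using e K0 by (simp add: field_simps)
      finally show "dist (f y') (f y) < e" .
    qed (use e K0 in simp)
  qed
  then obtain g where g: "uniformly_continuous_on (closure (range Z)) g" "\<And>y. y \<in> range Z \<Longrightarrow> f y = g y"
    using uniformly_continuous_on_extension_on_closure by metis
  have cg: "continuous_on UNIV g" using g(1) dense uniformly_continuous_imp_continuous by metis
  have gZ: "g (Z x) = R x" for x using g(2) fZ by (metis rangeI)
  show ?thesis using continuous_extension_bounded_linear[OF dense lZ lR cg gZ K] gZ by blast
qed

section \<open>Square roots of positive contractions\<close>

text \<open>The square root of a positive operator A with |A x|^2 \<le> <x, A x> is obtained from the
  binomial series sqrt(1 - t) = \<Sum> sqc n * t^n evaluated at the contraction B = 1 - A.  The series
  converges absolutely because all coefficients but the first are nonpositive and their partial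
  sums are bounded.\<close>

definition sqc :: "nat \<Rightarrow> real" where
  "sqc n = ((1/2::real) gchoose n) * (-1)^n"

lemma sqc_0 [simp]: "sqc 0 = 1"
  by (simp add: sqc_def)

lemma sqc_Suc0: "sqc (Suc 0) = -1/2"
  by (simp add: sqc_def)

lemma sqc_rec: "real (Suc n) * sqc (Suc n) = (real n - 1/2) * sqc n"
proof -
  have "of_nat (Suc n) * ((1/2::real) gchoose Suc n) = (1/2) * ((1/2 - 1) gchoose n)"
    by (rule gbinomial_absorption)
  moreover have "((1/2::real) - of_nat n) * ((1/2) gchoose n) = (1/2) * ((1/2 - 1) gchoose n)"
    by (rule gbinomial_absorb_comp)
  ultimately have "real (Suc n) * ((1/2::real) gchoose Suc n) = ((1/2::real) - real n) * ((1/2) gchoose n)"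
    by simp
  hence "real (Suc n) * (((1/2::real) gchoose Suc n) * (-1)^Suc n)
      = ((1/2::real) - real n) * ((1/2) gchoose n) * (-1)^Suc n"
    by simp
  thus ?thesis unfolding sqc_def by (simp add: algebra_simps)
qed

lemma sqc_nonpos: "n \<ge> 1 \<Longrightarrow> sqc n \<le> 0"
proof (induction n)
  case (Suc n)
  show ?case
  proof (cases "n = 0")
    case False
    hence "sqc n \<le> 0" "real n - 1/2 > 0" using Suc by simp_all
    hence "real (Suc n) * sqc (Suc n) \<le> 0" using sqc_rec[of n] by (simp add: mult_nonneg_nonpos)
    thus ?thesis by (simp add: mult_le_0_iff)
  qed (simp add: sqc_Suc0)
qed simp

text \<open>Telescoping via the recursion: the partial sums of the coefficients from 1 on.\<close>
lemma sqc_partial_sum: "(\<Sum>n\<in>{1..N}. sqc n) = -1 - 2 * real (Suc N) * sqc (Suc N)"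
proof (induction N)
  case 0 thus ?case using sqc_rec[of 0] by (simp add: sqc_Suc0)
next
  case (Suc N) thus ?case using sqc_rec[of "Suc N"] by (simp add: algebra_simps)
qed

lemma sqc_abs_partial_sum: "(\<Sum>n<N. \<bar>sqc (Suc n)\<bar>) \<le> 1"
proof -
  have "(\<Sum>n<N. \<bar>sqc (Suc n)\<bar>) = (\<Sum>n\<in>{1..N}. \<bar>sqc n\<bar>)"
    by (rule sum.reindex_bij_witness[where i = "\<lambda>n. n - 1" and j = Suc]) auto
  also have "\<dots> = - (\<Sum>n\<in>{1..N}. sqc n)"
    unfolding sum_negf[symmetric] by (rule sum.cong) (auto simp: sqc_nonpos abs_of_nonpos)
  also have "\<dots> = 1 + 2 * real (Suc N) * sqc (Suc N)" by (subst sqc_partial_sum) simp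
  also have "\<dots> \<le> 1" using sqc_nonpos[of "Suc N"] by (simp add: mult_nonneg_nonpos)
  finally show ?thesis .
qed

lemma sqc_shift_summable: "summable (\<lambda>n. \<bar>sqc (Suc n)\<bar>)"
  by (rule summableI_nonneg_bounded[where x = 1]) (auto simp: sqc_abs_partial_sum)

lemma sqc_shift_suminf_le: "(\<Sum>n. \<bar>sqc (Suc n)\<bar>) \<le> 1"
  by (rule suminf_le_const[OF sqc_shift_summable sqc_abs_partial_sum])

lemma sqc_abs_summable: "summable (\<lambda>n. \<bar>sqc n\<bar>)"
  using sqc_shift_summable summable_Suc_iff by blast

text \<open>Squaring the series gives 1 - t (Vandermonde's identity for 1/2 + 1/2 = 1).\<close>
lemma sqc_convolution:
  "(\<Sum>i\<le>k. sqc i * sqc (k - i)) = (if k = 0 then 1 else if k = 1 then -1 else 0)"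
proof -
  have "(\<Sum>i\<le>k. sqc i * sqc (k - i))
      = (\<Sum>i\<in>{0..k}. ((1/2::real) gchoose i) * ((1/2) gchoose (k - i))) * (-1)^k"
    unfolding sqc_def sum_distrib_right atLeast0AtMost
    by (rule sum.cong) (auto simp: power_add[symmetric])
  also have "\<dots> = ((1/2 + 1/2::real) gchoose k) * (-1)^k" by (simp only: gbinomial_Vandermonde)
  also have "\<dots> = real (1 choose k) * (-1)^k" by (simp add: binomial_gbinomial)
  also have "\<dots> = (if k = 0 then 1 else if k = 1 then -1 else 0)"
    by (cases k) (auto simp: binomial_eq_0)
  finally show ?thesis .
qed

definition Csq :: real where
  "Csq = (\<Sum>n. \<bar>sqc n\<bar>)"

lemma Csq_nonneg: "Csq \<ge> 0"
  unfolding Csq_def by (rule suminf_nonneg[OF sqc_abs_summable]) simp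

lemma sqc_abs_sum_le: "finite F \<Longrightarrow> (\<Sum>n\<in>F. \<bar>sqc n\<bar>) \<le> Csq"
  unfolding Csq_def by (rule sum_le_suminf[OF sqc_abs_summable]) auto

definition sqc_tail :: "nat \<Rightarrow> real" where
  "sqc_tail m = Csq - (\<Sum>n<m. \<bar>sqc n\<bar>)"

lemma sqc_tail_bound: "m \<le> N \<Longrightarrow> (\<Sum>n\<in>{m..<N}. \<bar>sqc n\<bar>) \<le> sqc_tail m"
  using sqc_abs_sum_le[of "{..<N}"]
  by (simp add: sqc_tail_def sum_diff_nat_ivl[of 0 m N, symmetric] atLeast0LessThan)

lemma sqc_tail_half_lim: "(\<lambda>N. sqc_tail (N div 2)) \<longlonglongrightarrow> 0"
proof -
  have "sqc_tail \<longlonglongrightarrow> Csq - Csq"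
    unfolding sqc_tail_def Csq_def by (intro tendsto_diff tendsto_const summable_LIMSEQ sqc_abs_summable)
  hence "sqc_tail \<longlonglongrightarrow> 0" by simp
  moreover have "filterlim (\<lambda>N::nat. N div 2) sequentially sequentially"
    unfolding filterlim_at_top eventually_sequentially
    by (metis div_le_mono nonzero_mult_div_cancel_left zero_neq_numeral)
  ultimately show ?thesis by (rule filterlim_compose)
qed

lemma sqc_abs_product_sum:
  "(\<Sum>(i, j)\<in>I \<times> K. \<bar>sqc i\<bar> * \<bar>sqc j\<bar> * c) = (\<Sum>i\<in>I. \<bar>sqc i\<bar>) * (\<Sum>j\<in>K. \<bar>sqc j\<bar>) * c"
proof -
  have "(\<Sum>i\<in>I. \<bar>sqc i\<bar>) * (\<Sum>j\<in>K. \<bar>sqc j\<bar>) * c = (\<Sum>i\<in>I. \<Sum>j\<in>K. \<bar>sqc i\<bar> * \<bar>sqc j\<bar>) * c"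
    by (simp only: sum_product)
  also have "\<dots> = (\<Sum>i\<in>I. \<Sum>j\<in>K. \<bar>sqc i\<bar> * \<bar>sqc j\<bar> * c)"
    by (simp only: sum_distrib_right)
  finally show ?thesis by (simp only: sum.cartesian_product)
qed

text \<open>Comparison test for series in a complete normed space (the library version is stated for
  the class banach, which a type of sort real_inner and complete_space does not belong to).\<close>
lemma summable_norm_le:
  fixes f :: "nat \<Rightarrow> 'a::{real_normed_vector,complete_space}"
  assumes bound: "\<And>n. norm (f n) \<le> g n" and g: "summable g"
  shows "summable f"
proof -
  have partial: "norm ((\<Sum>i<m. f i) - (\<Sum>i<n. f i)) \<le> \<bar>(\<Sum>i<m. g i) - (\<Sum>i<n. g i)\<bar>" for m n
  proof -
    have le: "norm ((\<Sum>i<b. f i) - (\<Sum>i<a. f i)) \<le> (\<Sum>i<b. g i) - (\<Sum>i<a. g i)"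
      if "a \<le> b" for a b
    proof -
      have "(\<Sum>i<b. f i) - (\<Sum>i<a. f i) = (\<Sum>i\<in>{a..<b}. f i)"
        "(\<Sum>i<b. g i) - (\<Sum>i<a. g i) = (\<Sum>i\<in>{a..<b}. g i)"
        using that by (simp_all add: sum_diff_nat_ivl[of 0 a b, symmetric] atLeast0LessThan)
      thus ?thesis using bound by (simp add: sum_norm_le)
    qed
    show ?thesis
      using le[of m n] le[of n m] by (cases "n \<le> m") (auto simp: norm_minus_commute)
  qed
  have g_Cauchy: "Cauchy (\<lambda>n. \<Sum>i<n. g i)"
    using g unfolding summable_iff_convergent by (rule convergent_Cauchy)
  have "Cauchy (\<lambda>n. \<Sum>i<n. f i)"
  proof (rule CauchyI)
    fix e :: real assume "0 < e"
    then obtain M where M: "\<forall>m\<ge>M. \<forall>n\<ge>M. norm ((\<Sum>i<m. g i) - (\<Sum>i<n. g i)) < e"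
      using CauchyD[OF g_Cauchy] by blast
    show "\<exists>M. \<forall>m\<ge>M. \<forall>n\<ge>M. norm ((\<Sum>i<m. f i) - (\<Sum>i<n. f i)) < e"
    proof (intro exI allI impI)
      fix m n assume "M \<le> m" "M \<le> n"
      hence "\<bar>(\<Sum>i<m. g i) - (\<Sum>i<n. g i)\<bar> < e" using M by simp
      thus "norm ((\<Sum>i<m. f i) - (\<Sum>i<n. f i)) < e" using partial[of m n] by linarith
    qed
  qed
  thus ?thesis unfolding summable_iff_convergent by (rule Cauchy_convergent)
qed

definition contraction :: "('h::real_normed_vector \<Rightarrow> 'h) \<Rightarrow> bool" where
  "contraction B \<longleftrightarrow> bounded_linear B \<and> (\<forall>x. norm (B x) \<le> norm x)"

definition sqrt_partial :: "('h::real_normed_vector \<Rightarrow> 'h) \<Rightarrow> nat \<Rightarrow> 'h \<Rightarrow> 'h" where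
  "sqrt_partial B N x = (\<Sum>n<N. sqc n *\<^sub>R (B ^^ n) x)"

text \<open>sqrt_series B = sqrt(1 - B).\<close>
definition sqrt_series :: "('h::real_normed_vector \<Rightarrow> 'h) \<Rightarrow> 'h \<Rightarrow> 'h" where
  "sqrt_series B x = (\<Sum>n. sqc n *\<^sub>R (B ^^ n) x)"

lemma funpow_bounded_linear: "bounded_linear (B :: 'a::real_normed_vector \<Rightarrow> 'a) \<Longrightarrow> bounded_linear (B ^^ n)"
  by (induction n) (auto simp: id_def bounded_linear_ident o_def intro: bounded_linear_compose)

lemma funpow_contraction: "contraction B \<Longrightarrow> norm ((B ^^ n) x) \<le> norm x"
  by (induction n) (auto simp: contraction_def intro: order_trans)

context
  fixes B :: "'h::{real_normed_vector,complete_space} \<Rightarrow> 'h"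
  assumes B: "contraction B"
begin

lemma funpow_linear: "linear (B ^^ n)"
  using B by (simp add: contraction_def funpow_bounded_linear bounded_linear.linear)

lemma sqrt_series_summable: "summable (\<lambda>n. sqc n *\<^sub>R (B ^^ n) x)"
  by (rule summable_norm_le[where g = "\<lambda>n. \<bar>sqc n\<bar> * norm x"])
     (use funpow_contraction[OF B] in \<open>auto intro: mult_left_mono summable_mult2 sqc_abs_summable\<close>)

lemma sqrt_partial_lim: "(\<lambda>N. sqrt_partial B N x) \<longlonglongrightarrow> sqrt_series B x"
  unfolding sqrt_partial_def sqrt_series_def by (rule summable_LIMSEQ[OF sqrt_series_summable])

lemma sqrt_partial_norm: "norm (sqrt_partial B N x) \<le> Csq * norm x"
proof -
  have "norm (sqrt_partial B N x) \<le> (\<Sum>n<N. \<bar>sqc n\<bar> * norm x)"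
    unfolding sqrt_partial_def
    by (intro sum_norm_le) (use funpow_contraction[OF B] in \<open>simp add: mult_left_mono\<close>)
  also have "\<dots> \<le> Csq * norm x"
    by (simp add: sum_distrib_right[symmetric] mult_right_mono sqc_abs_sum_le)
  finally show ?thesis .
qed

lemma sqrt_partial_diff: "sqrt_partial B N (a - b) = sqrt_partial B N a - sqrt_partial B N b"
  unfolding sqrt_partial_def by (simp add: linear_diff[OF funpow_linear] scaleR_diff_right sum_subtractf)

lemma sqrt_series_map:
  assumes "bounded_linear L"
  shows "L (sqrt_series B x) = (\<Sum>n. sqc n *\<^sub>R L ((B ^^ n) x))"
    and "summable (\<lambda>n. sqc n *\<^sub>R L ((B ^^ n) x))"
  unfolding sqrt_series_def
  using bounded_linear.suminf[OF assms sqrt_series_summable]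
    bounded_linear.summable[OF assms sqrt_series_summable]
  by (simp_all add: linear_scale[OF bounded_linear.linear[OF assms]])

lemma sqrt_series_bounded_linear: "bounded_linear (sqrt_series B)"
proof (rule bounded_linear_intro[where K = Csq])
  fix x y :: 'h and r :: real
  show "sqrt_series B (x + y) = sqrt_series B x + sqrt_series B y"
    unfolding sqrt_series_def
    by (subst suminf_add[OF sqrt_series_summable sqrt_series_summable])
       (simp add: linear_add[OF funpow_linear] scaleR_add_right)
  show "sqrt_series B (r *\<^sub>R x) = r *\<^sub>R sqrt_series B x"
    using sqrt_series_map(1)[OF bounded_linear_scaleR_right, of r x]
    by (simp add: sqrt_series_def linear_scale[OF funpow_linear])
  show "norm (sqrt_series B x) \<le> norm x * Csq"
    using LIMSEQ_le_const2[OF tendsto_norm[OF sqrt_partial_lim]] sqrt_partial_norm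
    by (simp add: mult.commute)
qed

lemma sqrt_partial_square:
  "sqrt_partial B N (sqrt_partial B N x) = (\<Sum>(i, j)\<in>{..<N} \<times> {..<N}. (sqc i * sqc j) *\<^sub>R (B ^^ (i + j)) x)"
  unfolding sqrt_partial_def
  by (simp add: linear_sum[OF funpow_linear] linear_scale[OF funpow_linear] scaleR_sum_right
      funpow_add sum.cartesian_product)

text \<open>Below the antidiagonal i + j = N the coefficients combine (Vandermonde) to give 1 - B.\<close>
lemma sqrt_partial_square_triangle:
  assumes "N \<ge> 2"
  shows "(\<Sum>(i, j)\<in>{(i, j). i + j < N}. (sqc i * sqc j) *\<^sub>R (B ^^ (i + j)) x) = x - B x"
proof -
  have "(\<Sum>(i, j)\<in>{(i, j). i + j < N}. (sqc i * sqc j) *\<^sub>R (B ^^ (i + j)) x)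
      = (\<Sum>k<N. (\<Sum>i\<le>k. sqc i * sqc (k - i)) *\<^sub>R (B ^^ k) x)"
    using sum.triangle_reindex[of "\<lambda>i j. (sqc i * sqc j) *\<^sub>R (B ^^ (i + j)) x" N]
    by (simp add: scaleR_sum_left)
  also have "\<dots> = (\<Sum>k\<in>{0, 1}. (if k = 0 then 1 else if k = 1 then -1 else 0) *\<^sub>R (B ^^ k) x)"
    unfolding sqc_convolution by (rule sum.mono_neutral_right) (use assms in auto)
  finally show ?thesis by simp
qed

text \<open>The remaining terms have i, j < N \<le> i + j, so i or j is at least N/2; their total size is
  controlled by the tail of the coefficient series.\<close>
lemma sqrt_partial_square_error:
  assumes "N \<ge> 2"
  shows "norm (sqrt_partial B N (sqrt_partial B N x) - (x - B x)) \<le> 2 * Csq * norm x * sqc_tail (N div 2)"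
proof -
  define m where "m = N div 2"
  let ?c = "\<lambda>(i, j). (sqc i * sqc j) *\<^sub>R (B ^^ (i + j)) x"
  let ?a = "\<lambda>(i, j). \<bar>sqc i\<bar> * \<bar>sqc j\<bar> * norm x"
  let ?S = "{..<N} \<times> {..<N} - {(i, j). i + j < N}"
  let ?U1 = "{m..<N} \<times> {..<N}" and ?U2 = "{..<N} \<times> {m..<N}"
  have "sqrt_partial B N (sqrt_partial B N x) - (x - B x) = (\<Sum>p\<in>?S. ?c p)"
    using sqrt_partial_square sqrt_partial_square_triangle[OF assms] by (subst sum_diff) auto
  also have "norm \<dots> \<le> (\<Sum>p\<in>?S. ?a p)"
    by (intro sum_norm_le) (auto simp: abs_mult funpow_contraction[OF B] mult_left_mono)
  also have "\<dots> \<le> (\<Sum>p\<in>?U1 \<union> ?U2. ?a p)"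
    by (intro sum_mono2) (auto simp: m_def)
  also have "\<dots> \<le> (\<Sum>p\<in>?U1. ?a p) + (\<Sum>p\<in>?U2. ?a p)"
    using sum_Un[of ?U1 ?U2 ?a] sum_nonneg[of "?U1 \<inter> ?U2" ?a] by auto
  also have "\<dots> = 2 * ((\<Sum>j<N. \<bar>sqc j\<bar>) * norm x) * (\<Sum>i\<in>{m..<N}. \<bar>sqc i\<bar>)"
    by (simp add: sqc_abs_product_sum)
  also have "\<dots> \<le> 2 * (Csq * norm x) * sqc_tail m"
    using sqc_tail_bound[of m N] sqc_abs_sum_le[of "{..<N}"]
    by (intro mult_mono mult_left_mono mult_right_mono) (auto simp: m_def sum_nonneg Csq_nonneg)
  finally show ?thesis by (simp add: m_def mult.assoc)
qed

lemma sqrt_partial_square_lim: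
  "(\<lambda>N. sqrt_partial B N (sqrt_partial B N x)) \<longlonglongrightarrow> sqrt_series B (sqrt_series B x)"
proof -
  let ?P = "sqrt_partial B" and ?y = "sqrt_series B x"
  have "(\<lambda>N. ?P N x - ?y) \<longlonglongrightarrow> 0"
    using sqrt_partial_lim[of x] by (simp add: LIM_zero)
  hence "(\<lambda>N. Csq * norm (?P N x - ?y)) \<longlonglongrightarrow> 0"
    by (metis mult_zero_right tendsto_mult_left tendsto_norm_zero)
  hence "(\<lambda>N. ?P N (?P N x - ?y)) \<longlonglongrightarrow> 0"
    by (rule Lim_null_comparison[rotated]) (simp add: sqrt_partial_norm)
  hence "(\<lambda>N. ?P N (?P N x - ?y) + ?P N ?y) \<longlonglongrightarrow> 0 + sqrt_series B ?y"
    by (intro tendsto_add sqrt_partial_lim)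
  thus ?thesis by (simp add: sqrt_partial_diff)
qed

lemma sqrt_series_square: "sqrt_series B (sqrt_series B x) = x - B x"
proof -
  have "(\<lambda>N. 2 * Csq * norm x * sqc_tail (N div 2)) \<longlonglongrightarrow> 0"
    using tendsto_mult[OF tendsto_const sqc_tail_half_lim, of "2 * Csq * norm x"] by simp
  moreover have "\<forall>\<^sub>F N in sequentially. norm (sqrt_partial B N (sqrt_partial B N x) - (x - B x))
      \<le> 2 * Csq * norm x * sqc_tail (N div 2)"
    unfolding eventually_sequentially by (intro exI[of _ 2] allI impI sqrt_partial_square_error)
  ultimately have "(\<lambda>N. sqrt_partial B N (sqrt_partial B N x) - (x - B x)) \<longlonglongrightarrow> 0"
    by (rule Lim_null_comparison[rotated])
  hence "(\<lambda>N. sqrt_partial B N (sqrt_partial B N x)) \<longlonglongrightarrow> x - B x" by (simp add: LIM_zero_iff)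
  thus ?thesis using sqrt_partial_square_lim LIMSEQ_unique by blast
qed

end

lemma sqrt_series_intertwine:
  fixes B B' C :: "'h::{real_normed_vector,complete_space} \<Rightarrow> 'h"
  assumes B': "contraction B'" and C: "bounded_linear C" and BC: "\<And>y. B (C y) = C (B' y)"
  shows "sqrt_series B (C x) = C (sqrt_series B' x)"
proof -
  have pow: "(B ^^ n) (C y) = C ((B' ^^ n) y)" for n y by (induction n) (auto simp: BC)
  have "C (sqrt_series B' x) = (\<Sum>n. C (sqc n *\<^sub>R (B' ^^ n) x))"
    unfolding sqrt_series_def by (rule bounded_linear.suminf[OF C sqrt_series_summable[OF B']])
  also have "\<dots> = sqrt_series B (C x)"
    unfolding sqrt_series_def by (simp add: pow linear_scale[OF bounded_linear.linear[OF C]])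
  finally show ?thesis by simp
qed


text \<open>Operators A with |A x|^2 \<le> <x, A x> (for self-adjoint A: 0 \<le> A \<le> 1); for them B = 1 - A is a
  contraction.\<close>
definition sqrt_admissible :: "('h::real_inner \<Rightarrow> 'h) \<Rightarrow> bool" where
  "sqrt_admissible A \<longleftrightarrow> bounded_linear A \<and> (\<forall>x. norm (A x)^2 \<le> inner x (A x))"

definition op_sqrt :: "('h::real_inner \<Rightarrow> 'h) \<Rightarrow> 'h \<Rightarrow> 'h" where
  "op_sqrt A = sqrt_series (\<lambda>x. x - A x)"

lemma sqrt_admissible_contraction:
  assumes "sqrt_admissible A" shows "contraction (\<lambda>x. x - A x)"
  unfolding contraction_def
proof (intro conjI allI)
  show "bounded_linear (\<lambda>x. x - A x)"
    using assms by (intro bounded_linear_sub bounded_linear_ident) (simp add: sqrt_admissible_def)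
  fix x
  have h: "norm (A x)^2 \<le> inner x (A x)" using assms by (simp add: sqrt_admissible_def)
  have "norm (x - A x)^2 = inner x x - 2 * inner x (A x) + norm (A x)^2"
    by (simp only: power2_norm_eq_inner) (simp add: inner_diff inner_commute)
  also have "\<dots> \<le> inner x x" using h zero_le_power2[of "norm (A x)"] by linarith
  also have "\<dots> = (norm x)^2" by (simp add: power2_norm_eq_inner)
  finally show "norm (x - A x) \<le> norm x" by (rule power2_le_imp_le) simp
qed

context
  fixes A :: "'h::{real_inner,complete_space} \<Rightarrow> 'h"
  assumes A: "sqrt_admissible A"
begin

lemma op_sqrt_bounded_linear: "bounded_linear (op_sqrt A)"
  unfolding op_sqrt_def by (rule sqrt_series_bounded_linear[OF sqrt_admissible_contraction[OF A]])

lemma op_sqrt_square: "op_sqrt A (op_sqrt A x) = A x"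
  unfolding op_sqrt_def using sqrt_series_square[OF sqrt_admissible_contraction[OF A]] by simp

lemma op_sqrt_intertwine:
  fixes A' C :: "'h \<Rightarrow> 'h"
  assumes A': "sqrt_admissible A'" and C: "bounded_linear C" and AC: "\<And>x. A (C x) = C (A' x)"
  shows "op_sqrt A (C x) = C (op_sqrt A' x)"
proof -
  have "(\<lambda>x. x - A x) (C y) = C ((\<lambda>x. x - A' x) y)" for y
    using AC linear_diff[OF bounded_linear.linear[OF C]] by simp
  thus ?thesis unfolding op_sqrt_def
    by (rule sqrt_series_intertwine[OF sqrt_admissible_contraction[OF A'] C])
qed

lemma op_sqrt_selfadjoint:
  assumes sa: "is_adjoint A A" shows "is_adjoint (op_sqrt A) (op_sqrt A)"
  unfolding is_adjoint_def
proof (intro allI)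
  fix x y
  let ?B = "\<lambda>x. x - A x"
  have powers: "inner ((?B ^^ n) x) y = inner x ((?B ^^ n) y)" for n x y
  proof (induction n arbitrary: x y)
    case (Suc n)
    have "inner ((?B ^^ Suc n) x) y = inner ((?B ^^ n) x) (y - A y)"
      using sa unfolding is_adjoint_def by (simp add: inner_diff)
    also have "\<dots> = inner x ((?B ^^ Suc n) y)" by (simp add: Suc funpow_Suc_right del: funpow.simps)
    finally show ?case .
  qed simp
  note series = sqrt_series_map(1)[OF sqrt_admissible_contraction[OF A]]
  show "inner (op_sqrt A x) y = inner x (op_sqrt A y)"
    unfolding op_sqrt_def series[OF bounded_linear_inner_left] series[OF bounded_linear_inner_right]
    by (simp add: powers)
qed

text \<open>Positivity: <x, sqrt A x> = |x|^2 + \<Sum>_{n\<ge>1} sqc n <x, B^n x> \<ge> |x|^2 (1 - \<Sum>_{n\<ge>1} |sqc n|) \<ge> 0.\<close>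
lemma op_sqrt_nonneg: "inner x (op_sqrt A x) \<ge> 0"
proof -
  let ?B = "\<lambda>x. x - A x"
  define t where "t n = inner x ((?B ^^ n) x)" for n
  have B: "contraction ?B" by (rule sqrt_admissible_contraction[OF A])
  have tb: "\<bar>t n\<bar> \<le> norm x ^2" for n
  proof -
    have "\<bar>t n\<bar> \<le> norm x * norm ((?B ^^ n) x)" unfolding t_def by (rule Cauchy_Schwarz_ineq2)
    also have "\<dots> \<le> norm x * norm x" by (intro mult_left_mono funpow_contraction[OF B]) simp
    finally show ?thesis by (simp add: power2_eq_square)
  qed
  have eq: "inner x (op_sqrt A x) = (\<Sum>n. sqc n * t n)"
    and sm: "summable (\<lambda>n. sqc n * t n)"
    unfolding op_sqrt_def t_def using sqrt_series_map[OF B bounded_linear_inner_right] by simp_all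
  have "(\<Sum>n. sqc n * t n) = norm x ^2 + (\<Sum>n. sqc (Suc n) * t (Suc n))"
    using suminf_split_head[OF sm] by (simp add: t_def power2_norm_eq_inner)
  moreover have "(\<Sum>n. - (\<bar>sqc (Suc n)\<bar> * norm x ^2)) \<le> (\<Sum>n. sqc (Suc n) * t (Suc n))"
  proof (rule suminf_le)
    fix n
    have "\<bar>sqc (Suc n) * t (Suc n)\<bar> \<le> \<bar>sqc (Suc n)\<bar> * norm x ^2"
      using tb[of "Suc n"] by (simp add: abs_mult mult_left_mono)
    thus "- (\<bar>sqc (Suc n)\<bar> * norm x ^2) \<le> sqc (Suc n) * t (Suc n)" by linarith
    show "summable (\<lambda>n. - (\<bar>sqc (Suc n)\<bar> * norm x ^2))"
      by (intro summable_minus summable_mult2 sqc_shift_summable)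
    show "summable (\<lambda>n. sqc (Suc n) * t (Suc n))"
      using summable_Suc_iff[of "\<lambda>n. sqc n * t n"] sm by simp
  qed
  moreover have "(\<Sum>n. - (\<bar>sqc (Suc n)\<bar> * norm x ^2)) = - ((\<Sum>n. \<bar>sqc (Suc n)\<bar>) * norm x ^2)"
    using suminf_minus[OF summable_mult2[OF sqc_shift_summable]] suminf_mult2[OF sqc_shift_summable]
    by simp
  moreover have "(\<Sum>n. \<bar>sqc (Suc n)\<bar>) * norm x ^2 \<le> 1 * norm x ^2"
    by (intro mult_right_mono sqc_shift_suminf_le) simp
  ultimately show ?thesis using eq by linarith
qed

end

lemma nonneg_selfadjoint_zero:
  fixes S :: "'h::real_inner \<Rightarrow> 'h"
  assumes bl: "bounded_linear S" and sa: "is_adjoint S S" and pos: "\<And>x. inner x (S x) \<ge> 0"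
    and y: "inner y (S y) = 0"
  shows "S y = 0"
proof -
  have lin: "linear S" using bl by (rule bounded_linear.linear)
  have "- inner (S y) (S y) = 0"
  proof (rule quadratic_nonneg_imp_linear_zero[where b = "inner (S y) (S (S y))"])
    fix t
    have "0 \<le> inner (y + t *\<^sub>R S y) (S (y + t *\<^sub>R S y))" by (rule pos)
    also have "\<dots> = inner y (S y) + t * inner y (S (S y)) + t * inner (S y) (S y)
        + t^2 * inner (S y) (S (S y))"
      by (simp add: linear_add[OF lin] linear_scale[OF lin] inner_add power2_eq_square algebra_simps)
    also have "inner y (S (S y)) = inner (S y) (S y)" using sa unfolding is_adjoint_def by metis
    finally show "0 \<le> - 2 * t * - inner (S y) (S y) + t^2 * inner (S y) (S (S y))" using y by simp
  qed (rule pos)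
  thus ?thesis by simp
qed

lemma sqrt_unique:
  fixes S R :: "'h::real_inner \<Rightarrow> 'h"
  assumes blS: "bounded_linear S" and blR: "bounded_linear R"
    and saS: "is_adjoint S S" and saR: "is_adjoint R R"
    and posS: "\<And>x. inner x (S x) \<ge> 0" and posR: "\<And>x. inner x (R x) \<ge> 0"
    and comm: "\<And>x. S (R x) = R (S x)" and sq: "\<And>x. S (S x) = R (R x)"
  shows "S = R"
proof
  fix x0
  have lS: "linear S" and lR: "linear R" using blS blR by (simp_all add: bounded_linear.linear)
  define D where "D x = S x - R x" for x
  have zero: "S (D x) = 0 \<and> R (D x) = 0" for x
  proof -
    have "S (D x) + R (D x) = 0"
      unfolding D_def by (simp add: linear_diff[OF lS] linear_diff[OF lR] comm sq)
    hence "inner (D x) (S (D x)) + inner (D x) (R (D x)) = 0"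
      by (metis inner_add_right inner_zero_right)
    moreover have "inner (D x) (S (D x)) \<ge> 0" "inner (D x) (R (D x)) \<ge> 0" by (rule posS, rule posR)
    ultimately show ?thesis
      using nonneg_selfadjoint_zero[OF blS saS posS] nonneg_selfadjoint_zero[OF blR saR posR]
      by (metis add_nonneg_eq_0_iff)
  qed
  have "inner (D x0) (D x0) = inner x0 (D (D x0))"
    using saS saR unfolding is_adjoint_def D_def
    by (simp add: inner_diff_left inner_diff_right linear_diff[OF lS] linear_diff[OF lR])
  also have "D (D x0) = 0" using zero[of x0] by (simp add: D_def)
  finally show "S x0 = R x0" by (simp add: D_def)
qed

lemma pmul_mon: "pmul (mon u) (mon v) = mon (u @ v)"
proof
  fix w
  have split: "(take k w = u \<and> drop k w = v) \<longleftrightarrow> (k = length u \<and> w = u @ v)" if "k \<le> length w" for k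
    using that by (metis append_eq_conv_conj length_take min.absorb2)
  have "pmul (mon u) (mon v) w = (\<Sum>k\<le>length w. if k = length u \<and> w = u @ v then 1 else 0)"
    unfolding pmul_def mon_def by (rule sum.cong) (use split in auto)
  also have "\<dots> = (if w = u @ v then 1 else 0)"
    by (cases "w = u @ v") (auto simp: sum.delta)
  finally show "pmul (mon u) (mon v) w = mon (u @ v) w" by (simp add: mon_def)
qed

lemma pmul_padd_left: "pmul (padd f g) h = padd (pmul f h) (pmul g h)"
  unfolding pmul_def padd_def by (simp add: distrib_right sum.distrib)
lemma pmul_padd_right: "pmul h (padd f g) = padd (pmul h f) (pmul h g)"
  unfolding pmul_def padd_def by (simp add: distrib_left sum.distrib)
lemma pmul_pdiff_left: "pmul (pdiff f g) h = pdiff (pmul f h) (pmul g h)"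
  unfolding pmul_def pdiff_def by (simp add: left_diff_distrib sum_subtractf)
lemma pmul_pdiff_right: "pmul h (pdiff f g) = pdiff (pmul h f) (pmul h g)"
  unfolding pmul_def pdiff_def by (simp add: right_diff_distrib sum_subtractf)
lemma pmul_psc_left: "pmul (psc c f) h = psc c (pmul f h)"
  unfolding pmul_def psc_def by (simp add: sum_distrib_left mult.assoc)
lemma pmul_psc_right: "pmul h (psc c f) = psc c (pmul h f)"
  unfolding pmul_def psc_def by (simp add: sum_distrib_left mult.left_commute)

lemma wstar_wstar [simp]: "wstar (wstar w) = w"
  unfolding wstar_def rev_map[symmetric] by (induction w) auto

lemma pstar_mon: "pstar (mon w) = mon (wstar w)"
  unfolding pstar_def mon_def by (metis wstar_wstar complex_cnj_one complex_cnj_zero)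

lemma pstar_padd: "pstar (padd f g) = padd (pstar f) (pstar g)" by (simp add: pstar_def padd_def)
lemma pstar_pdiff: "pstar (pdiff f g) = pdiff (pstar f) (pstar g)" by (simp add: pstar_def pdiff_def)
lemma pstar_psc: "pstar (psc c f) = psc (cnj c) (pstar f)" by (simp add: pstar_def psc_def)

lemmas poly_simps = pmul_mon pmul_padd_left pmul_padd_right pmul_pdiff_left pmul_pdiff_right
  pmul_psc_left pmul_psc_right pstar_mon pstar_padd pstar_pdiff pstar_psc

lemma pdiff_as_padd: "pdiff f g = padd f (psc (-1) g)"
  by (simp add: pdiff_def padd_def psc_def)

lemma pstar_p: "pstar (p i j) = p j i"
  by (simp add: p_def pstar_mon wstar_def)

lemma pmul_zs_z: "pmul (zs i) (z j) = p i j"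
  by (simp add: zs_def z_def p_def pmul_mon)

lemma fsupp_mon: "fsupp (mon w)"
  unfolding fsupp_def mon_def by (rule finite_subset[of _ "{w}"]) auto
lemma fsupp_padd: "fsupp f \<Longrightarrow> fsupp g \<Longrightarrow> fsupp (padd f g)"
  unfolding fsupp_def padd_def by (rule finite_subset[of _ "{w. f w \<noteq> 0} \<union> {w. g w \<noteq> 0}"]) auto
lemma fsupp_pdiff: "fsupp f \<Longrightarrow> fsupp g \<Longrightarrow> fsupp (pdiff f g)"
  unfolding fsupp_def pdiff_def by (rule finite_subset[of _ "{w. f w \<noteq> 0} \<union> {w. g w \<noteq> 0}"]) auto
lemma fsupp_psc: "fsupp f \<Longrightarrow> fsupp (psc c f)"
  unfolding fsupp_def psc_def by (rule finite_subset[of _ "{w. f w \<noteq> 0}"]) auto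

lemma pstar_support: "{w. pstar f w \<noteq> 0} = wstar ` {w. f w \<noteq> 0}"
  unfolding pstar_def by (auto simp: image_iff) (metis wstar_wstar)

lemma fsupp_pstar: "fsupp f \<Longrightarrow> fsupp (pstar f)"
  unfolding fsupp_def pstar_support by simp

lemma pmul_as_sum:
  assumes "fsupp f" "fsupp g"
  shows "pmul f g w = (\<Sum>p\<in>{p \<in> {u. f u \<noteq> 0} \<times> {v. g v \<noteq> 0}. fst p @ snd p = w}. f (fst p) * g (snd p))"
proof -
  let ?F = "{u. f u \<noteq> 0}" and ?G = "{v. g v \<noteq> 0}"
  let ?K = "{k. k \<le> length w \<and> take k w \<in> ?F \<and> drop k w \<in> ?G}"
  have "pmul f g w = (\<Sum>k\<in>?K. f (take k w) * g (drop k w))"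
    unfolding pmul_def by (rule sum.mono_neutral_right) auto
  also have "\<dots> = (\<Sum>p\<in>{p \<in> ?F \<times> ?G. fst p @ snd p = w}. f (fst p) * g (snd p))"
    by (rule sum.reindex_bij_witness[where i = "\<lambda>p. length (fst p)" and j = "\<lambda>k. (take k w, drop k w)"])
       (auto simp: min_def)
  finally show ?thesis .
qed

lemma pmul_support:
  assumes "fsupp f" "fsupp g"
  shows "{w. pmul f g w \<noteq> 0} \<subseteq> (\<lambda>p. fst p @ snd p) ` ({u. f u \<noteq> 0} \<times> {v. g v \<noteq> 0})"
proof
  fix w assume "w \<in> {w. pmul f g w \<noteq> 0}"
  hence "(\<Sum>p\<in>{p \<in> {u. f u \<noteq> 0} \<times> {v. g v \<noteq> 0}. fst p @ snd p = w}. f (fst p) * g (snd p)) \<noteq> 0"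
    by (simp add: pmul_as_sum[OF assms])
  then obtain p where "p \<in> {p \<in> {u. f u \<noteq> 0} \<times> {v. g v \<noteq> 0}. fst p @ snd p = w}"
    using sum.not_neutral_contains_not_neutral by blast
  thus "w \<in> (\<lambda>p. fst p @ snd p) ` ({u. f u \<noteq> 0} \<times> {v. g v \<noteq> 0})" by force
qed

lemma fsupp_pmul: "fsupp f \<Longrightarrow> fsupp g \<Longrightarrow> fsupp (pmul f g)"
  using pmul_support unfolding fsupp_def by (meson finite_SigmaI finite_imageI finite_subset)

lemma fsupp_gens: "fsupp (z i)" "fsupp (zs i)" "fsupp (p i j)" "fsupp pone"
  by (simp_all add: z_def zs_def p_def pone_def fsupp_mon)

lemma S5_ideal_fsupp: "f \<in> S5_ideal q \<Longrightarrow> fsupp f"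
proof (induction rule: S5_ideal.induct)
  case (rel r) thus ?case unfolding S5_rels_def comm_def
    by (auto intro!: fsupp_pdiff fsupp_pmul fsupp_psc fsupp_padd fsupp_gens)
qed (auto intro: fsupp_padd fsupp_psc fsupp_pmul fsupp_pstar)

lemma CP2_fsupp: "f \<in> CP2_alg \<Longrightarrow> fsupp f"
  by (induction rule: CP2_alg.induct) (auto intro: fsupp_gens fsupp_padd fsupp_psc fsupp_pmul fsupp_pstar)

lemma CP2_pdiff: "f \<in> CP2_alg \<Longrightarrow> g \<in> CP2_alg \<Longrightarrow> pdiff f g \<in> CP2_alg"
  unfolding pdiff_as_padd by (intro CP2_alg.intros)

section \<open>Relations of A(CP^2_q) derived from those of A(S^5_q)\<close>

definition rel_zz :: "real \<Rightarrow> gen \<Rightarrow> gen \<Rightarrow> poly" where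
  "rel_zz q i j = pdiff (pmul (z i) (z j)) (psc (of_real q) (pmul (z j) (z i)))"
definition rel_zsz :: "real \<Rightarrow> gen \<Rightarrow> gen \<Rightarrow> poly" where
  "rel_zsz q i j = pdiff (pmul (zs i) (z j)) (psc (of_real q) (pmul (z j) (zs i)))"
definition rel_zz_star :: "real \<Rightarrow> gen \<Rightarrow> gen \<Rightarrow> poly" where
  "rel_zz_star q i j = pstar (rel_zz q i j)"
definition rel_comm1 :: poly where
  "rel_comm1 = comm (zs G1) (z G1)"
definition rel_comm2 :: "real \<Rightarrow> poly" where
  "rel_comm2 q = pdiff (comm (zs G2) (z G2)) (psc (of_real (1 - q\<^sup>2)) (pmul (z G1) (zs G1)))"
definition rel_comm3 :: "real \<Rightarrow> poly" where
  "rel_comm3 q = pdiff (comm (zs G3) (z G3))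
     (psc (of_real (1 - q\<^sup>2)) (padd (pmul (z G1) (zs G1)) (pmul (z G2) (zs G2))))"
definition rel_sphere :: poly where
  "rel_sphere = pdiff (padd (padd (pmul (z G1) (zs G1)) (pmul (z G2) (zs G2))) (pmul (z G3) (zs G3))) pone"

lemma rel_zz_in: "gnum i < gnum j \<Longrightarrow> rel_zz q i j \<in> S5_ideal q"
  unfolding rel_zz_def by (rule S5_ideal.rel) (auto simp: S5_rels_def)
lemma rel_zz_star_in: "gnum i < gnum j \<Longrightarrow> rel_zz_star q i j \<in> S5_ideal q"
  unfolding rel_zz_star_def by (rule S5_ideal.star[OF rel_zz_in])
lemma rel_zsz_in: "i \<noteq> j \<Longrightarrow> rel_zsz q i j \<in> S5_ideal q"
  unfolding rel_zsz_def by (rule S5_ideal.rel) (auto simp: S5_rels_def)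
lemma rel_comm1_in: "rel_comm1 \<in> S5_ideal q"
  unfolding rel_comm1_def by (rule S5_ideal.rel) (auto simp: S5_rels_def)
lemma rel_comm2_in: "rel_comm2 q \<in> S5_ideal q"
  unfolding rel_comm2_def by (rule S5_ideal.rel) (auto simp: S5_rels_def)
lemma rel_comm3_in: "rel_comm3 q \<in> S5_ideal q"
  unfolding rel_comm3_def by (rule S5_ideal.rel) (auto simp: S5_rels_def)
lemma rel_sphere_in: "rel_sphere \<in> S5_ideal q"
  unfolding rel_sphere_def by (rule S5_ideal.rel) (auto simp: S5_rels_def)

definition iterm :: "complex \<Rightarrow> letter list \<Rightarrow> poly \<Rightarrow> letter list \<Rightarrow> poly" where
  "iterm c u r v = psc c (pmul (pmul (mon u) r) (mon v))"

lemma iterm_in: "r \<in> S5_ideal q \<Longrightarrow> iterm c u r v \<in> S5_ideal q"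
  unfolding iterm_def by (intro S5_ideal.sc S5_ideal.rmul S5_ideal.lmul fsupp_mon)

lemma zero_in_S5_ideal: "(\<lambda>w. 0) \<in> S5_ideal q"
  using S5_ideal.sc[OF rel_sphere_in, of 0] by (simp add: psc_def)

lemma poly_eq_outside:
  fixes f g :: poly
  assumes "\<And>w. w \<notin> W \<Longrightarrow> f w = 0" "\<And>w. w \<notin> W \<Longrightarrow> g w = 0" "\<forall>w\<in>W. f w = g w"
  shows "f = g"
  using assms by (metis ext)

lemma power4_as_product: "(x::complex)^4 = x*x*x*x"
  by (simp add: power_numeral_even power2_eq_square Let_def mult.assoc)

lemmas rel_defs = rel_zz_def rel_zsz_def rel_zz_star_def rel_comm1_def rel_comm2_def rel_comm3_def
  rel_sphere_def comm_def z_def zs_def p_def pone_def iterm_def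

text \<open>Each relation below is proved by an explicit certificate: the difference of its two sides is
  written as a linear combination of two-sided multiples of the defining relations, and the
  resulting identity of noncommutative polynomials is checked coefficientwise.\<close>

lemma rel_p11_decomp:
  assumes q0: "q \<noteq> 0"
  shows "pdiff (p G1 G1) (padd (padd (pmul (p G1 G1) (p G1 G1)) (pmul (p G1 G2) (p G2 G1))) (pmul (p G1 G3) (p G3 G1))) \<in> S5_ideal q"
proof -
  have eq: "pdiff (p G1 G1) (padd (padd (pmul (p G1 G1) (p G1 G1)) (pmul (p G1 G2) (p G2 G1))) (pmul (p G1 G3) (p G3 G1))) =
      (padd (iterm ((1)) [] rel_comm1 [])
      (padd (iterm ((-1)) [] rel_comm1 [(G1, True), (G1, False)])
      (padd (iterm ((-1)) [] (rel_zsz q G1 G2) [(G2, True), (G1, False)])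
      (padd (iterm ((-1)) [] (rel_zsz q G1 G3) [(G3, True), (G1, False)])
      (padd (iterm ((-1)) [(G1, False), (G1, True)] rel_comm1 [])
      (padd (iterm ((-1)) [(G1, False)] rel_comm1 [(G1, True)])
      (padd (iterm ((-1) * (complex_of_real q)^1) [(G2, False), (G1, True)] (rel_zsz q G2 G1) [])
      (padd (iterm ((-1) * (complex_of_real q)^2) [(G2, False)] rel_comm1 [(G2, True)])
      (padd (iterm ((1) * (complex_of_real q)^1) [] (rel_zz q G1 G2) [(G1, True), (G2, True)])
      (padd (iterm ((-1) * (complex_of_real q)^1) [(G3, False), (G1, True)] (rel_zsz q G3 G1) [])
      (padd (iterm ((-1) * (complex_of_real q)^2) [(G3, False)] rel_comm1 [(G3, True)])
      (padd (iterm ((1) * (complex_of_real q)^1) [] (rel_zz q G1 G3) [(G1, True), (G3, True)])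
      (padd (iterm ((-1)) [(G1, False), (G1, True)] rel_sphere [])
      (padd (iterm ((1)) [(G1, False)] rel_comm1 [(G1, True)])
      (padd (iterm ((1)) [(G1, False)] (rel_zsz q G1 G2) [(G2, True)])
      (padd (iterm ((1)) [(G1, False)] (rel_zsz q G1 G3) [(G3, True)]) (\<lambda>w. 0)))))))))))))))))"
    apply (rule poly_eq_outside[where W =
      "{[(G1, True), (G1, False)],
       [(G1, True), (G1, False), (G1, True), (G1, False)],
       [(G1, True), (G2, False), (G2, True), (G1, False)],
       [(G1, True), (G3, False), (G3, True), (G1, False)],
       [(G1, False), (G1, True)],
       [(G1, False), (G1, True), (G1, True), (G1, False)],
       [(G1, False), (G1, True), (G1, False), (G1, True)],
       [(G1, False), (G1, True), (G2, False), (G2, True)],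
       [(G1, False), (G1, True), (G3, False), (G3, True)],
       [(G1, False), (G1, False), (G1, True), (G1, True)],
       [(G1, False), (G2, False), (G1, True), (G2, True)],
       [(G1, False), (G3, False), (G1, True), (G3, True)],
       [(G2, False), (G1, True), (G2, True), (G1, False)],
       [(G2, False), (G1, True), (G1, False), (G2, True)],
       [(G2, False), (G1, False), (G1, True), (G2, True)],
       [(G3, False), (G1, True), (G3, True), (G1, False)],
       [(G3, False), (G1, True), (G1, False), (G3, True)],
       [(G3, False), (G1, False), (G1, True), (G3, True)]}"])
    apply (simp_all only: rel_defs poly_simps)
    apply (simp_all add: pdiff_def padd_def psc_def mon_def wstar_def q0 field_simps power2_eq_square power3_eq_cube power4_as_product)
    done
  show ?thesis unfolding eq
    by (intro S5_ideal.add iterm_in rel_zz_in rel_zz_star_in rel_zsz_in rel_comm1_in rel_comm2_in rel_comm3_in rel_sphere_in zero_in_S5_ideal; simp)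
qed

lemma rel_p21_p12:
  assumes q0: "q \<noteq> 0"
  shows "pdiff (pmul (p G2 G1) (p G1 G2)) (psc (of_real (q^2)) (pmul (p G1 G1) (p G2 G2))) \<in> S5_ideal q"
proof -
  have eq: "pdiff (pmul (p G2 G1) (p G1 G2)) (psc (of_real (q^2)) (pmul (p G1 G1) (p G2 G2))) =
      (padd (iterm ((1)) [] (rel_zsz q G2 G1) [(G1, True), (G2, False)])
      (padd (iterm ((1) * (complex_of_real q)^1) [(G1, False)] (rel_zz_star q G1 G2) [(G2, False)])
      (padd (iterm ((1) * (complex_of_real q)^2) [(G1, False), (G1, True)] (rel_comm2 q) [])
      (padd (iterm ((1) * (complex_of_real q)^2 + (-1) * (complex_of_real q)^4) [(G1, False)] rel_comm1 [(G1, True)])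
      (padd (iterm ((1) * (complex_of_real q)^2) [(G1, False)] (rel_zsz q G1 G2) [(G2, True)])
      (padd (iterm ((-1) * (complex_of_real q)^2) [] rel_comm1 [(G2, True), (G2, False)])
      (padd (iterm ((-1) * (complex_of_real q)^2) [(G1, False), (G1, True)] (rel_comm2 q) [])
      (padd (iterm ((-1) * (complex_of_real q)^2 + (1) * (complex_of_real q)^4) [(G1, False)] rel_comm1 [(G1, True)])
      (padd (iterm ((-1) * (complex_of_real q)^2) [(G1, False)] (rel_zsz q G1 G2) [(G2, True)]) (\<lambda>w. 0))))))))))"
    apply (rule poly_eq_outside[where W =
      "{[(G1, True), (G1, False), (G2, True), (G2, False)],
       [(G2, True), (G1, False), (G1, True), (G2, False)],
       [(G1, False), (G1, True), (G2, True), (G2, False)],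
       [(G1, False), (G1, True), (G1, False), (G1, True)],
       [(G1, False), (G1, True), (G2, False), (G2, True)],
       [(G1, False), (G2, True), (G1, True), (G2, False)],
       [(G1, False), (G1, False), (G1, True), (G1, True)],
       [(G1, False), (G2, False), (G1, True), (G2, True)]}"])
    apply (simp_all only: rel_defs poly_simps)
    apply (simp_all add: pdiff_def padd_def psc_def mon_def wstar_def q0 field_simps power2_eq_square power3_eq_cube power4_as_product)
    done
  show ?thesis unfolding eq
    by (intro S5_ideal.add iterm_in rel_zz_in rel_zz_star_in rel_zsz_in rel_comm1_in rel_comm2_in rel_comm3_in rel_sphere_in zero_in_S5_ideal; simp)
qed

lemma rel_p31_p13:
  assumes q0: "q \<noteq> 0"
  shows "pdiff (pmul (p G3 G1) (p G1 G3)) (psc (of_real (q^2)) (pmul (p G1 G1) (p G3 G3))) \<in> S5_ideal q"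
proof -
  have eq: "pdiff (pmul (p G3 G1) (p G1 G3)) (psc (of_real (q^2)) (pmul (p G1 G1) (p G3 G3))) =
      (padd (iterm ((1)) [] (rel_zsz q G3 G1) [(G1, True), (G3, False)])
      (padd (iterm ((1) * (complex_of_real q)^1) [(G1, False)] (rel_zz_star q G1 G3) [(G3, False)])
      (padd (iterm ((1) * (complex_of_real q)^2) [(G1, False), (G1, True)] (rel_comm3 q) [])
      (padd (iterm ((1) * (complex_of_real q)^2 + (-1) * (complex_of_real q)^4) [(G1, False)] rel_comm1 [(G1, True)])
      (padd (iterm ((1) * (complex_of_real q)^2 + (-1) * (complex_of_real q)^4) [(G1, False)] (rel_zsz q G1 G2) [(G2, True)])
      (padd (iterm ((1) * (complex_of_real q)^2) [(G1, False)] (rel_zsz q G1 G3) [(G3, True)])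
      (padd (iterm ((-1) * (complex_of_real q)^2) [] rel_comm1 [(G3, True), (G3, False)])
      (padd (iterm ((-1) * (complex_of_real q)^2) [(G1, False), (G1, True)] (rel_comm3 q) [])
      (padd (iterm ((-1) * (complex_of_real q)^2 + (1) * (complex_of_real q)^4) [(G1, False)] rel_comm1 [(G1, True)])
      (padd (iterm ((-1) * (complex_of_real q)^2 + (1) * (complex_of_real q)^4) [(G1, False)] (rel_zsz q G1 G2) [(G2, True)])
      (padd (iterm ((-1) * (complex_of_real q)^2) [(G1, False)] (rel_zsz q G1 G3) [(G3, True)]) (\<lambda>w. 0))))))))))))"
    apply (rule poly_eq_outside[where W =
      "{[(G1, True), (G1, False), (G3, True), (G3, False)],
       [(G3, True), (G1, False), (G1, True), (G3, False)],
       [(G1, False), (G1, True), (G3, True), (G3, False)],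
       [(G1, False), (G1, True), (G1, False), (G1, True)],
       [(G1, False), (G1, True), (G2, False), (G2, True)],
       [(G1, False), (G1, True), (G3, False), (G3, True)],
       [(G1, False), (G3, True), (G1, True), (G3, False)],
       [(G1, False), (G1, False), (G1, True), (G1, True)],
       [(G1, False), (G2, False), (G1, True), (G2, True)],
       [(G1, False), (G3, False), (G1, True), (G3, True)]}"])
    apply (simp_all only: rel_defs poly_simps)
    apply (simp_all add: pdiff_def padd_def psc_def mon_def wstar_def q0 field_simps power2_eq_square power3_eq_cube power4_as_product)
    done
  show ?thesis unfolding eq
    by (intro S5_ideal.add iterm_in rel_zz_in rel_zz_star_in rel_zsz_in rel_comm1_in rel_comm2_in rel_comm3_in rel_sphere_in zero_in_S5_ideal; simp)
qed

lemma rel_p11_p22: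
  assumes q0: "q \<noteq> 0"
  shows "pdiff (pmul (p G1 G1) (p G2 G2)) (pmul (p G2 G2) (p G1 G1)) \<in> S5_ideal q"
proof -
  have eq: "pdiff (pmul (p G1 G1) (p G2 G2)) (pmul (p G2 G2) (p G1 G1)) =
      (padd (iterm ((1)) [] rel_comm1 [(G2, True), (G2, False)])
      (padd (iterm ((1)) [(G1, False), (G1, True)] (rel_comm2 q) [])
      (padd (iterm ((1) + (-1) * (complex_of_real q)^2) [(G1, False)] rel_comm1 [(G1, True)])
      (padd (iterm ((1)) [(G1, False)] (rel_zsz q G1 G2) [(G2, True)])
      (padd (iterm ((-1)) [] (rel_comm2 q) [(G1, True), (G1, False)])
      (padd (iterm ((-1) + (1) * (complex_of_real q)^2) [(G1, False), (G1, True)] rel_comm1 [])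
      (padd (iterm ((-1) + (1) * (complex_of_real q)^2) [(G1, False)] rel_comm1 [(G1, True)])
      (padd (iterm ((-1)) [(G2, False)] (rel_zz_star q G1 G2) [(G1, False)])
      (padd (iterm ((-1) * (complex_of_real q)^1) [(G2, False), (G1, True)] (rel_zsz q G2 G1) [])
      (padd (iterm ((-1) * (complex_of_real q)^2) [(G2, False)] rel_comm1 [(G2, True)])
      (padd (iterm ((1) * (complex_of_real q)^1) [] (rel_zz q G1 G2) [(G1, True), (G2, True)]) (\<lambda>w. 0))))))))))))"
    apply (rule poly_eq_outside[where W =
      "{[(G1, True), (G1, False), (G2, True), (G2, False)],
       [(G2, True), (G2, False), (G1, True), (G1, False)],
       [(G1, False), (G1, True), (G1, True), (G1, False)],
       [(G1, False), (G1, True), (G2, True), (G2, False)],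
       [(G1, False), (G1, True), (G1, False), (G1, True)],
       [(G1, False), (G1, True), (G2, False), (G2, True)],
       [(G1, False), (G1, False), (G1, True), (G1, True)],
       [(G1, False), (G2, False), (G1, True), (G2, True)],
       [(G2, False), (G1, True), (G2, True), (G1, False)],
       [(G2, False), (G1, True), (G1, False), (G2, True)],
       [(G2, False), (G2, True), (G1, True), (G1, False)],
       [(G2, False), (G1, False), (G1, True), (G2, True)]}"])
    apply (simp_all only: rel_defs poly_simps)
    apply (simp_all add: pdiff_def padd_def psc_def mon_def wstar_def q0 field_simps power2_eq_square power3_eq_cube power4_as_product)
    done
  show ?thesis unfolding eq
    by (intro S5_ideal.add iterm_in rel_zz_in rel_zz_star_in rel_zsz_in rel_comm1_in rel_comm2_in rel_comm3_in rel_sphere_in zero_in_S5_ideal; simp)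
qed

lemma rel_p11_p33:
  assumes q0: "q \<noteq> 0"
  shows "pdiff (pmul (p G1 G1) (p G3 G3)) (pmul (p G3 G3) (p G1 G1)) \<in> S5_ideal q"
proof -
  have eq: "pdiff (pmul (p G1 G1) (p G3 G3)) (pmul (p G3 G3) (p G1 G1)) =
      (padd (iterm ((1)) [] rel_comm1 [(G3, True), (G3, False)])
      (padd (iterm ((1)) [(G1, False), (G1, True)] (rel_comm3 q) [])
      (padd (iterm ((1) + (-1) * (complex_of_real q)^2) [(G1, False)] rel_comm1 [(G1, True)])
      (padd (iterm ((1) + (-1) * (complex_of_real q)^2) [(G1, False)] (rel_zsz q G1 G2) [(G2, True)])
      (padd (iterm ((1)) [(G1, False)] (rel_zsz q G1 G3) [(G3, True)])
      (padd (iterm ((-1)) [] (rel_comm3 q) [(G1, True), (G1, False)])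
      (padd (iterm ((-1) + (1) * (complex_of_real q)^2) [(G1, False), (G1, True)] rel_comm1 [])
      (padd (iterm ((-1) + (1) * (complex_of_real q)^2) [(G1, False)] rel_comm1 [(G1, True)])
      (padd (iterm ((-1) + (1) * (complex_of_real q)^2) [(G2, False)] (rel_zz_star q G1 G2) [(G1, False)])
      (padd (iterm ((-1) * (complex_of_real q)^1 + (1) * (complex_of_real q)^3) [(G2, False), (G1, True)] (rel_zsz q G2 G1) [])
      (padd (iterm ((-1) * (complex_of_real q)^2 + (1) * (complex_of_real q)^4) [(G2, False)] rel_comm1 [(G2, True)])
      (padd (iterm ((1) * (complex_of_real q)^1 + (-1) * (complex_of_real q)^3) [] (rel_zz q G1 G2) [(G1, True), (G2, True)])
      (padd (iterm ((-1)) [] rel_sphere [(G1, True), (G1, False)])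
      (padd (iterm ((1)) [(G1, False), (G1, True)] rel_comm1 [])
      (padd (iterm ((1)) [(G1, False)] rel_comm1 [(G1, True)])
      (padd (iterm ((1)) [(G2, False)] (rel_zz_star q G1 G2) [(G1, False)])
      (padd (iterm ((1) * (complex_of_real q)^1) [(G2, False), (G1, True)] (rel_zsz q G2 G1) [])
      (padd (iterm ((1) * (complex_of_real q)^2) [(G2, False)] rel_comm1 [(G2, True)])
      (padd (iterm ((-1) * (complex_of_real q)^1) [] (rel_zz q G1 G2) [(G1, True), (G2, True)])
      (padd (iterm ((-1)) [] rel_comm1 [])
      (padd (iterm ((1)) [(G1, False), (G1, True)] rel_sphere [])
      (padd (iterm ((-1)) [(G1, False)] rel_comm1 [(G1, True)])
      (padd (iterm ((-1)) [(G1, False)] (rel_zsz q G1 G2) [(G2, True)])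
      (padd (iterm ((-1)) [(G1, False)] (rel_zsz q G1 G3) [(G3, True)]) (\<lambda>w. 0)))))))))))))))))))))))))"
    apply (rule poly_eq_outside[where W =
      "{[(G1, True), (G1, False)],
       [(G1, True), (G1, False), (G3, True), (G3, False)],
       [(G3, True), (G3, False), (G1, True), (G1, False)],
       [(G1, False), (G1, True)],
       [(G1, False), (G1, True), (G1, True), (G1, False)],
       [(G1, False), (G1, True), (G3, True), (G3, False)],
       [(G1, False), (G1, True), (G1, False), (G1, True)],
       [(G1, False), (G1, True), (G2, False), (G2, True)],
       [(G1, False), (G1, True), (G3, False), (G3, True)],
       [(G1, False), (G1, False), (G1, True), (G1, True)],
       [(G1, False), (G2, False), (G1, True), (G2, True)],
       [(G1, False), (G3, False), (G1, True), (G3, True)],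
       [(G2, False), (G1, True), (G2, True), (G1, False)],
       [(G2, False), (G1, True), (G1, False), (G2, True)],
       [(G2, False), (G2, True), (G1, True), (G1, False)],
       [(G2, False), (G1, False), (G1, True), (G2, True)],
       [(G3, False), (G3, True), (G1, True), (G1, False)]}"])
    apply (simp_all only: rel_defs poly_simps)
    apply (simp_all add: pdiff_def padd_def psc_def mon_def wstar_def q0 field_simps power2_eq_square power3_eq_cube power4_as_product)
    done
  show ?thesis unfolding eq
    by (intro S5_ideal.add iterm_in rel_zz_in rel_zz_star_in rel_zsz_in rel_comm1_in rel_comm2_in rel_comm3_in rel_sphere_in zero_in_S5_ideal; simp)
qed

lemma rel_p11_p23:
  assumes q0: "q \<noteq> 0"
  shows "pdiff (pmul (p G1 G1) (p G2 G3)) (pmul (p G2 G3) (p G1 G1)) \<in> S5_ideal q"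
proof -
  have eq: "pdiff (pmul (p G1 G1) (p G2 G3)) (pmul (p G2 G3) (p G1 G1)) =
      (padd (iterm ((1)) [] rel_comm1 [(G2, True), (G3, False)])
      (padd (iterm ((1)) [(G1, False), (G1, True)] (rel_zsz q G2 G3) [])
      (padd (iterm ((1) * (complex_of_real q)^1) [(G1, False)] (rel_zsz q G1 G3) [(G2, True)])
      (padd (iterm ((-1)) [] (rel_zsz q G2 G3) [(G1, True), (G1, False)])
      (padd (iterm ((-1) * (complex_of_real q)^1) [(G3, False)] (rel_zz_star q G1 G2) [(G1, False)])
      (padd (iterm ((-1) * (complex_of_real q)^2) [(G3, False), (G1, True)] (rel_zsz q G2 G1) [])
      (padd (iterm ((-1) * (complex_of_real q)^3) [(G3, False)] rel_comm1 [(G2, True)])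
      (padd (iterm ((1) * (complex_of_real q)^2) [] (rel_zz q G1 G3) [(G1, True), (G2, True)]) (\<lambda>w. 0)))))))))"
    apply (rule poly_eq_outside[where W =
      "{[(G1, True), (G1, False), (G2, True), (G3, False)],
       [(G2, True), (G3, False), (G1, True), (G1, False)],
       [(G1, False), (G1, True), (G2, True), (G3, False)],
       [(G1, False), (G1, True), (G3, False), (G2, True)],
       [(G1, False), (G3, False), (G1, True), (G2, True)],
       [(G3, False), (G1, True), (G2, True), (G1, False)],
       [(G3, False), (G1, True), (G1, False), (G2, True)],
       [(G3, False), (G2, True), (G1, True), (G1, False)],
       [(G3, False), (G1, False), (G1, True), (G2, True)]}"])
    apply (simp_all only: rel_defs poly_simps)
    apply (simp_all add: pdiff_def padd_def psc_def mon_def wstar_def q0 field_simps power2_eq_square power3_eq_cube power4_as_product)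
    done
  show ?thesis unfolding eq
    by (intro S5_ideal.add iterm_in rel_zz_in rel_zz_star_in rel_zsz_in rel_comm1_in rel_comm2_in rel_comm3_in rel_sphere_in zero_in_S5_ideal; simp)
qed

lemma rel_p21_p13:
  assumes q0: "q \<noteq> 0"
  shows "pdiff (pmul (p G2 G1) (p G1 G3)) (psc (of_real (q^2)) (pmul (p G1 G1) (p G2 G3))) \<in> S5_ideal q"
proof -
  have eq: "pdiff (pmul (p G2 G1) (p G1 G3)) (psc (of_real (q^2)) (pmul (p G1 G1) (p G2 G3))) =
      (padd (iterm ((1)) [] (rel_zsz q G2 G1) [(G1, True), (G3, False)])
      (padd (iterm ((1) * (complex_of_real q)^1) [(G1, False)] (rel_zz_star q G1 G2) [(G3, False)])
      (padd (iterm ((1) * (complex_of_real q)^2) [(G1, False), (G1, True)] (rel_zsz q G2 G3) [])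
      (padd (iterm ((1) * (complex_of_real q)^3) [(G1, False)] (rel_zsz q G1 G3) [(G2, True)])
      (padd (iterm ((-1) * (complex_of_real q)^2) [] rel_comm1 [(G2, True), (G3, False)])
      (padd (iterm ((-1) * (complex_of_real q)^2) [(G1, False), (G1, True)] (rel_zsz q G2 G3) [])
      (padd (iterm ((-1) * (complex_of_real q)^3) [(G1, False)] (rel_zsz q G1 G3) [(G2, True)]) (\<lambda>w. 0))))))))"
    apply (rule poly_eq_outside[where W =
      "{[(G1, True), (G1, False), (G2, True), (G3, False)],
       [(G2, True), (G1, False), (G1, True), (G3, False)],
       [(G1, False), (G1, True), (G2, True), (G3, False)],
       [(G1, False), (G1, True), (G3, False), (G2, True)],
       [(G1, False), (G2, True), (G1, True), (G3, False)],
       [(G1, False), (G3, False), (G1, True), (G2, True)]}"])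
    apply (simp_all only: rel_defs poly_simps)
    apply (simp_all add: pdiff_def padd_def psc_def mon_def wstar_def q0 field_simps power2_eq_square power3_eq_cube power4_as_product)
    done
  show ?thesis unfolding eq
    by (intro S5_ideal.add iterm_in rel_zz_in rel_zz_star_in rel_zsz_in rel_comm1_in rel_comm2_in rel_comm3_in rel_sphere_in zero_in_S5_ideal; simp)
qed

lemma rel_p11_p12:
  assumes q0: "q \<noteq> 0"
  shows "pdiff (pmul (p G1 G1) (p G1 G2)) (psc (of_real (q^2)) (pmul (p G1 G2) (p G1 G1))) \<in> S5_ideal q"
proof -
  have eq: "pdiff (pmul (p G1 G1) (p G1 G2)) (psc (of_real (q^2)) (pmul (p G1 G2) (p G1 G1))) =
      (padd (iterm ((1)) [] rel_comm1 [(G1, True), (G2, False)])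
      (padd (iterm ((1)) [(G1, False), (G1, True)] (rel_zsz q G1 G2) [])
      (padd (iterm ((1) * (complex_of_real q)^1) [(G1, False)] (rel_zsz q G1 G2) [(G1, True)])
      (padd (iterm ((-1) * (complex_of_real q)^2) [] (rel_zsz q G1 G2) [(G1, True), (G1, False)])
      (padd (iterm ((-1) * (complex_of_real q)^3) [(G2, False), (G1, True)] rel_comm1 [])
      (padd (iterm ((-1) * (complex_of_real q)^3) [(G2, False)] rel_comm1 [(G1, True)])
      (padd (iterm ((1) * (complex_of_real q)^2) [] (rel_zz q G1 G2) [(G1, True), (G1, True)]) (\<lambda>w. 0))))))))"
    apply (rule poly_eq_outside[where W =
      "{[(G1, True), (G1, False), (G1, True), (G2, False)],
       [(G1, True), (G2, False), (G1, True), (G1, False)],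
       [(G1, False), (G1, True), (G1, True), (G2, False)],
       [(G1, False), (G1, True), (G2, False), (G1, True)],
       [(G1, False), (G2, False), (G1, True), (G1, True)],
       [(G2, False), (G1, True), (G1, True), (G1, False)],
       [(G2, False), (G1, True), (G1, False), (G1, True)],
       [(G2, False), (G1, False), (G1, True), (G1, True)]}"])
    apply (simp_all only: rel_defs poly_simps)
    apply (simp_all add: pdiff_def padd_def psc_def mon_def wstar_def q0 field_simps power2_eq_square power3_eq_cube power4_as_product)
    done
  show ?thesis unfolding eq
    by (intro S5_ideal.add iterm_in rel_zz_in rel_zz_star_in rel_zsz_in rel_comm1_in rel_comm2_in rel_comm3_in rel_sphere_in zero_in_S5_ideal; simp)
qed

lemma rel_p11_p13:
  assumes q0: "q \<noteq> 0"
  shows "pdiff (pmul (p G1 G1) (p G1 G3)) (psc (of_real (q^2)) (pmul (p G1 G3) (p G1 G1))) \<in> S5_ideal q"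
proof -
  have eq: "pdiff (pmul (p G1 G1) (p G1 G3)) (psc (of_real (q^2)) (pmul (p G1 G3) (p G1 G1))) =
      (padd (iterm ((1)) [] rel_comm1 [(G1, True), (G3, False)])
      (padd (iterm ((1)) [(G1, False), (G1, True)] (rel_zsz q G1 G3) [])
      (padd (iterm ((1) * (complex_of_real q)^1) [(G1, False)] (rel_zsz q G1 G3) [(G1, True)])
      (padd (iterm ((-1) * (complex_of_real q)^2) [] (rel_zsz q G1 G3) [(G1, True), (G1, False)])
      (padd (iterm ((-1) * (complex_of_real q)^3) [(G3, False), (G1, True)] rel_comm1 [])
      (padd (iterm ((-1) * (complex_of_real q)^3) [(G3, False)] rel_comm1 [(G1, True)])
      (padd (iterm ((1) * (complex_of_real q)^2) [] (rel_zz q G1 G3) [(G1, True), (G1, True)]) (\<lambda>w. 0))))))))"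
    apply (rule poly_eq_outside[where W =
      "{[(G1, True), (G1, False), (G1, True), (G3, False)],
       [(G1, True), (G3, False), (G1, True), (G1, False)],
       [(G1, False), (G1, True), (G1, True), (G3, False)],
       [(G1, False), (G1, True), (G3, False), (G1, True)],
       [(G1, False), (G3, False), (G1, True), (G1, True)],
       [(G3, False), (G1, True), (G1, True), (G1, False)],
       [(G3, False), (G1, True), (G1, False), (G1, True)],
       [(G3, False), (G1, False), (G1, True), (G1, True)]}"])
    apply (simp_all only: rel_defs poly_simps)
    apply (simp_all add: pdiff_def padd_def psc_def mon_def wstar_def q0 field_simps power2_eq_square power3_eq_cube power4_as_product)
    done
  show ?thesis unfolding eq
    by (intro S5_ideal.add iterm_in rel_zz_in rel_zz_star_in rel_zsz_in rel_comm1_in rel_comm2_in rel_comm3_in rel_sphere_in zero_in_S5_ideal; simp)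
qed

lemma rel_p13_p12:
  assumes q0: "q \<noteq> 0"
  shows "pdiff (pmul (p G1 G3) (p G1 G2)) (psc (of_real (inverse q)) (pmul (p G1 G2) (p G1 G3))) \<in> S5_ideal q"
proof -
  have eq: "pdiff (pmul (p G1 G3) (p G1 G2)) (psc (of_real (inverse q)) (pmul (p G1 G2) (p G1 G3))) =
      (padd (iterm ((1)) [] (rel_zsz q G1 G3) [(G1, True), (G2, False)])
      (padd (iterm ((1) * (complex_of_real q)^1) [(G3, False), (G1, True)] (rel_zsz q G1 G2) [])
      (padd (iterm ((1) * (complex_of_real q)^2) [(G3, False)] (rel_zsz q G1 G2) [(G1, True)])
      (padd (iterm ((-1) * (complex_of_real q)^2) [] (rel_zz q G2 G3) [(G1, True), (G1, True)])
      (padd (iterm ((-1) * inverse (complex_of_real q)^1) [] (rel_zsz q G1 G2) [(G1, True), (G3, False)])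
      (padd (iterm ((-1)) [(G2, False), (G1, True)] (rel_zsz q G1 G3) [])
      (padd (iterm ((-1) * (complex_of_real q)^1) [(G2, False)] (rel_zsz q G1 G3) [(G1, True)]) (\<lambda>w. 0))))))))"
    apply (rule poly_eq_outside[where W =
      "{[(G1, True), (G2, False), (G1, True), (G3, False)],
       [(G1, True), (G3, False), (G1, True), (G2, False)],
       [(G2, False), (G1, True), (G1, True), (G3, False)],
       [(G2, False), (G1, True), (G3, False), (G1, True)],
       [(G2, False), (G3, False), (G1, True), (G1, True)],
       [(G3, False), (G1, True), (G1, True), (G2, False)],
       [(G3, False), (G1, True), (G2, False), (G1, True)],
       [(G3, False), (G2, False), (G1, True), (G1, True)]}"])
    apply (simp_all only: rel_defs poly_simps)
    apply (simp_all add: pdiff_def padd_def psc_def mon_def wstar_def q0 field_simps power2_eq_square power3_eq_cube power4_as_product)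
    done
  show ?thesis unfolding eq
    by (intro S5_ideal.add iterm_in rel_zz_in rel_zz_star_in rel_zsz_in rel_comm1_in rel_comm2_in rel_comm3_in rel_sphere_in zero_in_S5_ideal; simp)
qed

lemma rel_p13_p21:
  assumes q0: "q \<noteq> 0"
  shows "pdiff (pmul (p G1 G3) (p G2 G1)) (psc (of_real (inverse q)) (pmul (p G1 G1) (p G2 G3))) \<in> S5_ideal q"
proof -
  have eq: "pdiff (pmul (p G1 G3) (p G2 G1)) (psc (of_real (inverse q)) (pmul (p G1 G1) (p G2 G3))) =
      (padd (iterm ((1)) [] (rel_zsz q G1 G3) [(G2, True), (G1, False)])
      (padd (iterm ((1) * (complex_of_real q)^1) [(G3, False), (G1, True)] (rel_zsz q G2 G1) [])
      (padd (iterm ((1) * (complex_of_real q)^2) [(G3, False)] rel_comm1 [(G2, True)])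
      (padd (iterm ((-1) * (complex_of_real q)^1) [] (rel_zz q G1 G3) [(G1, True), (G2, True)])
      (padd (iterm ((-1) * inverse (complex_of_real q)^1) [] rel_comm1 [(G2, True), (G3, False)])
      (padd (iterm ((-1) * inverse (complex_of_real q)^1) [(G1, False), (G1, True)] (rel_zsz q G2 G3) [])
      (padd (iterm ((-1)) [(G1, False)] (rel_zsz q G1 G3) [(G2, True)]) (\<lambda>w. 0))))))))"
    apply (rule poly_eq_outside[where W =
      "{[(G1, True), (G1, False), (G2, True), (G3, False)],
       [(G1, True), (G3, False), (G2, True), (G1, False)],
       [(G1, False), (G1, True), (G2, True), (G3, False)],
       [(G1, False), (G1, True), (G3, False), (G2, True)],
       [(G1, False), (G3, False), (G1, True), (G2, True)],
       [(G3, False), (G1, True), (G2, True), (G1, False)],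
       [(G3, False), (G1, True), (G1, False), (G2, True)],
       [(G3, False), (G1, False), (G1, True), (G2, True)]}"])
    apply (simp_all only: rel_defs poly_simps)
    apply (simp_all add: pdiff_def padd_def psc_def mon_def wstar_def q0 field_simps power2_eq_square power3_eq_cube power4_as_product)
    done
  show ?thesis unfolding eq
    by (intro S5_ideal.add iterm_in rel_zz_in rel_zz_star_in rel_zsz_in rel_comm1_in rel_comm2_in rel_comm3_in rel_sphere_in zero_in_S5_ideal; simp)
qed

lemma rel_p12_p21:
  assumes q0: "q \<noteq> 0"
  shows "pdiff (pmul (p G1 G2) (p G2 G1)) (pdiff (pmul (p G1 G1) (p G2 G2)) (psc (of_real (1 - q^2)) (pmul (p G1 G1) (p G1 G1)))) \<in> S5_ideal q"
proof -
  have eq: "pdiff (pmul (p G1 G2) (p G2 G1)) (pdiff (pmul (p G1 G1) (p G2 G2)) (psc (of_real (1 - q^2)) (pmul (p G1 G1) (p G1 G1)))) =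
      (padd (iterm ((1)) [] (rel_zsz q G1 G2) [(G2, True), (G1, False)])
      (padd (iterm ((1) * (complex_of_real q)^1) [(G2, False), (G1, True)] (rel_zsz q G2 G1) [])
      (padd (iterm ((1) * (complex_of_real q)^2) [(G2, False)] rel_comm1 [(G2, True)])
      (padd (iterm ((-1) * (complex_of_real q)^1) [] (rel_zz q G1 G2) [(G1, True), (G2, True)])
      (padd (iterm ((1) + (-1) * (complex_of_real q)^2) [] rel_comm1 [(G1, True), (G1, False)])
      (padd (iterm ((-1)) [] rel_comm1 [(G2, True), (G2, False)])
      (padd (iterm ((1) + (-1) * (complex_of_real q)^2) [(G1, False), (G1, True)] rel_comm1 [])
      (padd (iterm ((-1)) [(G1, False), (G1, True)] (rel_comm2 q) [])
      (padd (iterm ((-1)) [(G1, False)] (rel_zsz q G1 G2) [(G2, True)]) (\<lambda>w. 0))))))))))"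
    apply (rule poly_eq_outside[where W =
      "{[(G1, True), (G1, False), (G1, True), (G1, False)],
       [(G1, True), (G1, False), (G2, True), (G2, False)],
       [(G1, True), (G2, False), (G2, True), (G1, False)],
       [(G1, False), (G1, True), (G1, True), (G1, False)],
       [(G1, False), (G1, True), (G2, True), (G2, False)],
       [(G1, False), (G1, True), (G1, False), (G1, True)],
       [(G1, False), (G1, True), (G2, False), (G2, True)],
       [(G1, False), (G2, False), (G1, True), (G2, True)],
       [(G2, False), (G1, True), (G2, True), (G1, False)],
       [(G2, False), (G1, True), (G1, False), (G2, True)],
       [(G2, False), (G1, False), (G1, True), (G2, True)]}"])
    apply (simp_all only: rel_defs poly_simps)
    apply (simp_all add: pdiff_def padd_def psc_def mon_def wstar_def q0 field_simps power2_eq_square power3_eq_cube power4_as_product)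
    done
  show ?thesis unfolding eq
    by (intro S5_ideal.add iterm_in rel_zz_in rel_zz_star_in rel_zsz_in rel_comm1_in rel_comm2_in rel_comm3_in rel_sphere_in zero_in_S5_ideal; simp)
qed

lemma rel_p13_p31:
  assumes q0: "q \<noteq> 0"
  shows "pdiff (pmul (p G1 G3) (p G3 G1)) (pdiff (pmul (p G1 G1) (p G3 G3)) (psc (of_real (1 - q^2)) (pdiff (padd (pmul (p G1 G1) (p G1 G1)) (pmul (p G1 G1) (p G2 G2))) (psc (of_real (1 - q^2)) (pmul (p G1 G1) (p G1 G1)))))) \<in> S5_ideal q"
proof -
  have eq: "pdiff (pmul (p G1 G3) (p G3 G1)) (pdiff (pmul (p G1 G1) (p G3 G3)) (psc (of_real (1 - q^2)) (pdiff (padd (pmul (p G1 G1) (p G1 G1)) (pmul (p G1 G1) (p G2 G2))) (psc (of_real (1 - q^2)) (pmul (p G1 G1) (p G1 G1)))))) =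
      (padd (iterm ((1)) [] (rel_zsz q G1 G3) [(G3, True), (G1, False)])
      (padd (iterm ((1) * (complex_of_real q)^1) [(G3, False), (G1, True)] (rel_zsz q G3 G1) [])
      (padd (iterm ((1) * (complex_of_real q)^2) [(G3, False)] rel_comm1 [(G3, True)])
      (padd (iterm ((-1) * (complex_of_real q)^1) [] (rel_zz q G1 G3) [(G1, True), (G3, True)])
      (padd (iterm ((1) * (complex_of_real q)^2 + (-1) * (complex_of_real q)^4) [] rel_comm1 [(G1, True), (G1, False)])
      (padd (iterm ((1) + (-1) * (complex_of_real q)^2) [] rel_comm1 [(G2, True), (G2, False)])
      (padd (iterm ((-1)) [] rel_comm1 [(G3, True), (G3, False)])
      (padd (iterm ((1) * (complex_of_real q)^2 + (-1) * (complex_of_real q)^4) [(G1, False), (G1, True)] rel_comm1 [])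
      (padd (iterm ((1) + (-1) * (complex_of_real q)^2) [(G1, False), (G1, True)] (rel_comm2 q) [])
      (padd (iterm ((-1)) [(G1, False), (G1, True)] (rel_comm3 q) [])
      (padd (iterm ((-1)) [(G1, False)] (rel_zsz q G1 G3) [(G3, True)]) (\<lambda>w. 0))))))))))))"
    apply (rule poly_eq_outside[where W =
      "{[(G1, True), (G1, False), (G1, True), (G1, False)],
       [(G1, True), (G1, False), (G2, True), (G2, False)],
       [(G1, True), (G1, False), (G3, True), (G3, False)],
       [(G1, True), (G3, False), (G3, True), (G1, False)],
       [(G1, False), (G1, True), (G1, True), (G1, False)],
       [(G1, False), (G1, True), (G2, True), (G2, False)],
       [(G1, False), (G1, True), (G3, True), (G3, False)],
       [(G1, False), (G1, True), (G1, False), (G1, True)],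
       [(G1, False), (G1, True), (G2, False), (G2, True)],
       [(G1, False), (G1, True), (G3, False), (G3, True)],
       [(G1, False), (G3, False), (G1, True), (G3, True)],
       [(G3, False), (G1, True), (G3, True), (G1, False)],
       [(G3, False), (G1, True), (G1, False), (G3, True)],
       [(G3, False), (G1, False), (G1, True), (G3, True)]}"])
    apply (simp_all only: rel_defs poly_simps)
    apply (simp_all add: pdiff_def padd_def psc_def mon_def wstar_def q0 field_simps power2_eq_square power3_eq_cube power4_as_product)
    done
  show ?thesis unfolding eq
    by (intro S5_ideal.add iterm_in rel_zz_in rel_zz_star_in rel_zsz_in rel_comm1_in rel_comm2_in rel_comm3_in rel_sphere_in zero_in_S5_ideal; simp)
qed

lemma rel_unit:
  assumes q0: "q \<noteq> 0"
  shows "pdiff pone (padd (padd (psc (of_real (q^4)) (p G1 G1)) (psc (of_real (q^2)) (p G2 G2))) (p G3 G3)) \<in> S5_ideal q"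
proof -
  have eq: "pdiff pone (padd (padd (psc (of_real (q^4)) (p G1 G1)) (psc (of_real (q^2)) (p G2 G2))) (p G3 G3)) =
      (padd (iterm ((-1) * (complex_of_real q)^4) [] rel_comm1 [])
      (padd (iterm ((-1) * (complex_of_real q)^2) [] (rel_comm2 q) [])
      (padd (iterm ((-1)) [] (rel_comm3 q) [])
      (padd (iterm ((-1)) [] rel_sphere []) (\<lambda>w. 0)))))"
    apply (rule poly_eq_outside[where W =
      "{[],
       [(G1, True), (G1, False)],
       [(G2, True), (G2, False)],
       [(G3, True), (G3, False)],
       [(G1, False), (G1, True)],
       [(G2, False), (G2, True)],
       [(G3, False), (G3, True)]}"])
    apply (simp_all only: rel_defs poly_simps)
    apply (simp_all add: pdiff_def padd_def psc_def mon_def wstar_def q0 field_simps power2_eq_square power3_eq_cube power4_as_product)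
    done
  show ?thesis unfolding eq
    by (intro S5_ideal.add iterm_in rel_zz_in rel_zz_star_in rel_zsz_in rel_comm1_in rel_comm2_in rel_comm3_in rel_sphere_in zero_in_S5_ideal; simp)
qed

section \<open>Representations of the free *-algebra by operator families\<close>

definition letter_op :: "(gen \<Rightarrow> 'h \<Rightarrow> 'h) \<Rightarrow> (gen \<Rightarrow> 'h \<Rightarrow> 'h) \<Rightarrow> letter \<Rightarrow> 'h \<Rightarrow> 'h" where
  "letter_op Z Zs l = (if snd l then Zs (fst l) else Z (fst l))"

primrec word_op :: "(gen \<Rightarrow> 'h \<Rightarrow> 'h) \<Rightarrow> (gen \<Rightarrow> 'h \<Rightarrow> 'h) \<Rightarrow> letter list \<Rightarrow> 'h \<Rightarrow> 'h" where
  "word_op Z Zs [] = (\<lambda>x. x)"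
| "word_op Z Zs (l # w) = (\<lambda>x. letter_op Z Zs l (word_op Z Zs w x))"

lemma word_op_append: "word_op Z Zs (u @ v) x = word_op Z Zs u (word_op Z Zs v x)"
  by (induction u arbitrary: x) auto

definition poly_op :: "('h::real_inner \<Rightarrow> 'h) \<Rightarrow> (gen \<Rightarrow> 'h \<Rightarrow> 'h) \<Rightarrow> (gen \<Rightarrow> 'h \<Rightarrow> 'h) \<Rightarrow> poly \<Rightarrow> 'h \<Rightarrow> 'h" where
  "poly_op J Z Zs f = (\<lambda>x. \<Sum>w\<in>{w. f w \<noteq> 0}. csm J (f w) (word_op Z Zs w x))"

text \<open>The defining relations of A(S^5_q), for operators Z i (images of z_i) and Zs i (of z_i^*).\<close>
definition S5_relations :: "real \<Rightarrow> (gen \<Rightarrow> 'h::real_vector \<Rightarrow> 'h) \<Rightarrow> (gen \<Rightarrow> 'h \<Rightarrow> 'h) \<Rightarrow> bool" where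
  "S5_relations q Z Zs \<longleftrightarrow>
     (\<forall>i j x. gnum i < gnum j \<longrightarrow> Z i (Z j x) = q *\<^sub>R Z j (Z i x))
   \<and> (\<forall>i j x. i \<noteq> j \<longrightarrow> Zs i (Z j x) = q *\<^sub>R Z j (Zs i x))
   \<and> (\<forall>x. Zs G1 (Z G1 x) = Z G1 (Zs G1 x))
   \<and> (\<forall>x. Zs G2 (Z G2 x) - Z G2 (Zs G2 x) = (1 - q\<^sup>2) *\<^sub>R Z G1 (Zs G1 x))
   \<and> (\<forall>x. Zs G3 (Z G3 x) - Z G3 (Zs G3 x) = (1 - q\<^sup>2) *\<^sub>R (Z G1 (Zs G1 x) + Z G2 (Zs G2 x)))
   \<and> (\<forall>x. Z G1 (Zs G1 x) + Z G2 (Zs G2 x) + Z G3 (Zs G3 x) = x)"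

locale op_family =
  fixes J :: "'h::{real_inner,complete_space} \<Rightarrow> 'h" and Z Zs :: "gen \<Rightarrow> 'h \<Rightarrow> 'h"
  assumes J: "cstruct J" and Z_cbounded: "\<And>i. cbounded J (Z i)"
    and Zs_adjoint: "\<And>i. is_adjoint (Zs i) (Z i)"
begin

abbreviation "\<rho> \<equiv> poly_op J Z Zs"

lemma Zs_cbounded: "cbounded J (Zs i)"
  using cbounded_adj[OF J Z_cbounded[of i]]
  by (simp add: adj_eq[OF cbounded_bounded_linear[OF Z_cbounded] Zs_adjoint])

lemma word_op_cbounded: "cbounded J (word_op Z Zs w)"
  by (induction w) (simp_all add: cbounded_id cbounded_comp letter_op_def Z_cbounded Zs_cbounded)

lemma word_op_adjoint: "is_adjoint (word_op Z Zs (wstar w)) (word_op Z Zs w)"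
proof (induction w)
  case Nil thus ?case by (simp add: wstar_def is_adjoint_def)
next
  case (Cons l w)
  have "is_adjoint (letter_op Z Zs (fst l, \<not> snd l)) (letter_op Z Zs l)"
    by (cases l) (auto simp: letter_op_def Zs_adjoint is_adjoint_sym)
  hence "is_adjoint (word_op Z Zs (wstar w) \<circ> letter_op Z Zs (fst l, \<not> snd l)) (letter_op Z Zs l \<circ> word_op Z Zs w)"
    by (rule is_adjoint_comp[OF _ Cons])
  moreover have "wstar (l # w) = wstar w @ [(fst l, \<not> snd l)]" by (cases l) (simp add: wstar_def)
  ultimately show ?case by (simp add: word_op_append o_def)
qed

lemma poly_op_superset:
  assumes "finite S" "{w. f w \<noteq> 0} \<subseteq> S"
  shows "\<rho> f x = (\<Sum>w\<in>S. csm J (f w) (word_op Z Zs w x))"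
  unfolding poly_op_def by (rule sum.mono_neutral_left[OF assms]) auto

lemma poly_op_cbounded: "fsupp f \<Longrightarrow> cbounded J (\<rho> f)"
  unfolding poly_op_def fsupp_def
  by (intro cbounded_sum[OF J]) (auto simp: cscale_csm[symmetric] intro!: cbounded_cscale[OF J word_op_cbounded])

lemma poly_op_mon: "\<rho> (mon w) = word_op Z Zs w"
proof
  fix x
  have "{v. mon w v \<noteq> 0} = {w}" by (auto simp: mon_def)
  thus "\<rho> (mon w) x = word_op Z Zs w x" unfolding poly_op_def by (simp add: mon_def csm_def)
qed

lemma poly_op_gens: "\<rho> (z i) = Z i" "\<rho> (zs i) = Zs i" "\<rho> pone = (\<lambda>x. x)"
  by (auto simp: z_def zs_def pone_def poly_op_mon letter_op_def)

lemma poly_op_padd: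
  assumes "fsupp f" "fsupp g" shows "\<rho> (padd f g) x = \<rho> f x + \<rho> g x"
proof -
  let ?S = "{w. f w \<noteq> 0} \<union> {w. g w \<noteq> 0}"
  have fin: "finite ?S" using assms by (simp add: fsupp_def)
  have "\<rho> (padd f g) x = (\<Sum>w\<in>?S. csm J (padd f g w) (word_op Z Zs w x))"
    by (rule poly_op_superset[OF fin]) (auto simp: padd_def)
  thus ?thesis by (simp add: padd_def csm_add_scalar sum.distrib poly_op_superset[OF fin])
qed

lemma poly_op_pdiff:
  assumes "fsupp f" "fsupp g" shows "\<rho> (pdiff f g) x = \<rho> f x - \<rho> g x"
proof -
  let ?S = "{w. f w \<noteq> 0} \<union> {w. g w \<noteq> 0}"
  have fin: "finite ?S" using assms by (simp add: fsupp_def)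
  have "\<rho> (pdiff f g) x = (\<Sum>w\<in>?S. csm J (pdiff f g w) (word_op Z Zs w x))"
    by (rule poly_op_superset[OF fin]) (auto simp: pdiff_def)
  thus ?thesis
    by (simp add: pdiff_def csm_def sum_subtractf algebra_simps poly_op_superset[OF fin])
qed

lemma poly_op_psc:
  assumes "fsupp f" shows "\<rho> (psc c f) x = csm J c (\<rho> f x)"
proof -
  have "\<rho> (psc c f) x = (\<Sum>w\<in>{w. f w \<noteq> 0}. csm J (psc c f w) (word_op Z Zs w x))"
    using assms by (intro poly_op_superset) (auto simp: psc_def fsupp_def)
  thus ?thesis by (simp add: poly_op_def psc_def csm_mult[OF J] csm_sum_vector[OF J])
qed

text \<open>Multiplicativity: regroup the sum over words of f g by factorisations w = u @ v.\<close>
lemma poly_op_pmul: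
  assumes f: "fsupp f" and g: "fsupp g" shows "\<rho> (pmul f g) x = \<rho> f (\<rho> g x)"
proof -
  let ?F = "{u. f u \<noteq> 0}" and ?G = "{v. g v \<noteq> 0}"
  let ?app = "\<lambda>p. fst p @ snd p"
  have fF: "finite ?F" and fG: "finite ?G" using f g by (simp_all add: fsupp_def)
  have "\<rho> (pmul f g) x = (\<Sum>w\<in>?app ` (?F \<times> ?G). csm J (pmul f g w) (word_op Z Zs w x))"
    using fF fG by (intro poly_op_superset pmul_support f g) auto
  also have "\<dots> = (\<Sum>w\<in>?app ` (?F \<times> ?G). \<Sum>p\<in>{p \<in> ?F \<times> ?G. ?app p = w}.
      csm J (f (fst p) * g (snd p)) (word_op Z Zs (?app p) x))"
    by (rule sum.cong[OF refl]) (auto simp: pmul_as_sum[OF f g] csm_sum_scalar intro!: sum.cong)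
  also have "\<dots> = (\<Sum>p\<in>?F \<times> ?G. csm J (f (fst p) * g (snd p)) (word_op Z Zs (?app p) x))"
    by (rule sum.group) (use fF fG in auto)
  also have "\<dots> = (\<Sum>u\<in>?F. \<Sum>v\<in>?G. csm J (f u * g v) (word_op Z Zs (u @ v) x))"
    by (simp add: sum.cartesian_product case_prod_unfold)
  also have "\<dots> = \<rho> f (\<rho> g x)"
    unfolding poly_op_def
    by (simp add: csm_sum_vector[OF J] linear_sum[OF bounded_linear.linear[OF cbounded_bounded_linear[OF word_op_cbounded]]]
        cbounded_csm[OF J word_op_cbounded] csm_mult[OF J] word_op_append)
  finally show ?thesis .
qed

lemma poly_op_pstar:
  assumes f: "fsupp f" shows "is_adjoint (\<rho> (pstar f)) (\<rho> f)"
  unfolding is_adjoint_def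
proof (intro allI)
  fix x y
  let ?F = "{u. f u \<noteq> 0}"
  have inj: "inj_on wstar ?F" by (rule inj_onI) (metis wstar_wstar)
  have "inner (\<rho> (pstar f) x) y = (\<Sum>v\<in>?F. inner (csm J (cnj (f v)) (word_op Z Zs (wstar v) x)) y)"
    unfolding poly_op_def pstar_support by (simp add: inner_sum_left sum.reindex[OF inj] pstar_def)
  also have "\<dots> = (\<Sum>v\<in>?F. inner x (csm J (f v) (word_op Z Zs v y)))"
    using word_op_adjoint
    by (simp add: inner_csm[OF J] is_adjoint_def cbounded_csm[OF J word_op_cbounded])
  also have "\<dots> = inner x (\<rho> f y)" unfolding poly_op_def by (simp add: inner_sum_right)
  finally show "inner (\<rho> (pstar f) x) y = inner x (\<rho> f y)" .
qed

lemma poly_op_S5_ideal: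
  assumes rels: "S5_relations q Z Zs" and f: "f \<in> S5_ideal q"
  shows "\<rho> f x = 0"
  using f
proof (induction arbitrary: x rule: S5_ideal.induct)
  case (rel r)
  note fs = fsupp_gens fsupp_pmul fsupp_psc fsupp_pdiff fsupp_padd
  note ops = poly_op_pdiff poly_op_psc poly_op_padd poly_op_pmul poly_op_gens csm_of_real
  from rel rels show ?case unfolding S5_rels_def comm_def S5_relations_def
    by (elim UnE CollectE exE conjE insertE)
       (simp_all add: ops fs del: of_real_diff of_real_power)
next
  case (add f g) thus ?case by (simp add: poly_op_padd S5_ideal_fsupp)
next
  case (sc f c) thus ?case by (simp add: poly_op_psc S5_ideal_fsupp J csm_def cstruct_zero)
next
  case (lmul f g) thus ?case
    by (simp add: poly_op_pmul S5_ideal_fsupp linear_0 cbounded_bounded_linear[OF poly_op_cbounded]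
        bounded_linear.linear)
next
  case (rmul f g) thus ?case by (simp add: poly_op_pmul S5_ideal_fsupp)
next
  case (star f)
  have "inner (\<rho> (pstar f) x) y = 0" for y
    using poly_op_pstar[OF S5_ideal_fsupp[OF star(1)]] star(2) by (simp add: is_adjoint_def)
  from this[of "\<rho> (pstar f) x"] show ?case by simp
qed

theorem poly_op_star_rep:
  assumes rels: "S5_relations q Z Zs" shows "star_rep J q polys \<rho>"
  unfolding star_rep_def polys_def
proof (intro conjI ballI allI impI)
  fix f g c assume "f \<in> {f. fsupp f}" and "g \<in> {f. fsupp f}"
  hence f: "fsupp f" and g: "fsupp g" by auto
  show "cbounded J (\<rho> f)" by (rule poly_op_cbounded[OF f])
  show "\<rho> (padd f g) = (\<lambda>x. \<rho> f x + \<rho> g x)" by (rule ext) (rule poly_op_padd[OF f g])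
  show "\<rho> (psc c f) = cscale J c (\<rho> f)" by (rule ext) (simp add: poly_op_psc[OF f] cscale_csm)
  show "\<rho> (pmul f g) = \<rho> f \<circ> \<rho> g" by (rule ext) (simp add: poly_op_pmul[OF f g])
  show "\<rho> (pstar f) = cadj J (\<rho> f)"
    by (simp add: cadj_eq_adj[OF J poly_op_cbounded[OF f]]
        adj_eq[OF cbounded_bounded_linear[OF poly_op_cbounded[OF f]] poly_op_pstar[OF f]])
  assume I: "pdiff f g \<in> S5_ideal q"
  show "\<rho> f = \<rho> g"
  proof
    fix x
    have "\<rho> (pdiff f g) x = 0" by (rule poly_op_S5_ideal[OF rels I])
    thus "\<rho> f x = \<rho> g x" by (simp add: poly_op_pdiff[OF f g])
  qed
qed (simp add: poly_op_gens id_def)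

end

section \<open>Lifting a representation of A(CP^2_q)\<close>

text \<open>For self-adjoint complex-linear S, <x, J S x> = 0: the complex inner product <x, S x> is real.\<close>
lemma selfadjoint_inner_J:
  assumes J: "cstruct J" and sa: "is_adjoint S S" and SJ: "\<And>x. S (J x) = J (S x)"
  shows "inner x (J (S x)) = 0"
proof -
  have "inner x (J (S x)) = - inner (S (J x)) x"
    using sa unfolding is_adjoint_def by (metis cstruct_skew[OF J] inner_commute)
  also have "\<dots> = - inner x (J (S x))" by (simp add: SJ inner_commute)
  finally show ?thesis by simp
qed

lemma scaleR_cancel_factor: "c *\<^sub>R (a::'a::real_vector) = (c * d) *\<^sub>R b \<Longrightarrow> (c::real) \<noteq> 0 \<Longrightarrow> a = d *\<^sub>R b"
  by (metis scaleR_cancel_left scaleR_scaleR)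

lemma inverse_scaleR_eq: "inverse c *\<^sub>R (a::'a::real_vector) = b \<Longrightarrow> (c::real) \<noteq> 0 \<Longrightarrow> a = c *\<^sub>R b"
  by auto

locale cp2_rep =
  fixes q :: real and J :: "'h::{real_inner,complete_space} \<Rightarrow> 'h" and \<pi> :: "poly \<Rightarrow> 'h \<Rightarrow> 'h"
  assumes q0: "0 < q" and q1: "q < 1" and J: "cstruct J"
    and rep: "star_rep J q CP2_alg \<pi>"
    and ker: "\<forall>x. \<pi> (p G1 G1) x = 0 \<longrightarrow> x = 0"
begin

lemma rep_cbounded: "f \<in> CP2_alg \<Longrightarrow> cbounded J (\<pi> f)"
  using rep by (simp add: star_rep_def)
lemma rep_bounded_linear: "f \<in> CP2_alg \<Longrightarrow> bounded_linear (\<pi> f)"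
  using rep_cbounded cbounded_bounded_linear by blast
lemma rep_one: "\<pi> pone = id"
  using rep by (simp add: star_rep_def)
lemma rep_add: "f \<in> CP2_alg \<Longrightarrow> g \<in> CP2_alg \<Longrightarrow> \<pi> (padd f g) x = \<pi> f x + \<pi> g x"
  using rep by (simp add: star_rep_def)
lemma rep_sc: "f \<in> CP2_alg \<Longrightarrow> \<pi> (psc c f) x = cscale J c (\<pi> f) x"
  using rep by (simp add: star_rep_def)
lemma rep_scR: "f \<in> CP2_alg \<Longrightarrow> \<pi> (psc (of_real r) f) x = r *\<^sub>R \<pi> f x"
  by (simp add: rep_sc cscale_def)
lemma rep_mul: "f \<in> CP2_alg \<Longrightarrow> g \<in> CP2_alg \<Longrightarrow> \<pi> (pmul f g) = \<pi> f \<circ> \<pi> g"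
  using rep by (simp add: star_rep_def)
lemma rep_star: "f \<in> CP2_alg \<Longrightarrow> \<pi> (pstar f) = adj (\<pi> f)"
  using rep cadj_eq_adj[OF J rep_cbounded] by (simp add: star_rep_def)
lemma rep_diff: "f \<in> CP2_alg \<Longrightarrow> g \<in> CP2_alg \<Longrightarrow> \<pi> (pdiff f g) x = \<pi> f x - \<pi> g x"
  unfolding pdiff_as_padd by (simp add: rep_add rep_sc CP2_alg.intros cscale_def)

lemma rep_rel: "f \<in> CP2_alg \<Longrightarrow> g \<in> CP2_alg \<Longrightarrow> pdiff f g \<in> S5_ideal q \<Longrightarrow> \<pi> f x = \<pi> g x"
  using rep by (simp add: star_rep_def)

abbreviation "T i j \<equiv> \<pi> (p i j)"
abbreviation "A \<equiv> T G1 G1"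

lemma T_bounded_linear: "bounded_linear (T i j)"
  by (rule rep_bounded_linear[OF CP2_alg.gen])
lemma T_linear: "linear (T i j)"
  by (rule bounded_linear.linear[OF T_bounded_linear])
lemma T_cbounded: "cbounded J (T i j)"
  by (rule rep_cbounded[OF CP2_alg.gen])
lemma T_adj: "T j i = adj (T i j)"
  using rep_star[OF CP2_alg.gen, of i j] by (simp add: pstar_p)
lemma T_inner: "inner (T j i x) y = inner x (T i j y)"
  unfolding T_adj[of j i] by (rule adj_inner[OF T_bounded_linear])
lemma A_selfadjoint: "is_adjoint A A"
  unfolding is_adjoint_def by (metis T_inner)

lemmas rep_simps = rep_add rep_scR rep_mul rep_diff rep_one CP2_alg.intros CP2_pdiff

lemma q_nonzero: "q \<noteq> 0" using q0 by simp

lemma op_p11_decomp: "A x = A (A x) + T G1 G2 (T G2 G1 x) + T G1 G3 (T G3 G1 x)"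
  using rep_rel[OF _ _ rel_p11_decomp[OF q_nonzero], of x] by (simp add: rep_simps del: of_real_power)
lemma op_p21_p12: "T G2 G1 (T G1 G2 x) = q^2 *\<^sub>R A (T G2 G2 x)"
  using rep_rel[OF _ _ rel_p21_p12[OF q_nonzero], of x] by (simp add: rep_simps del: of_real_power)
lemma op_p31_p13: "T G3 G1 (T G1 G3 x) = q^2 *\<^sub>R A (T G3 G3 x)"
  using rep_rel[OF _ _ rel_p31_p13[OF q_nonzero], of x] by (simp add: rep_simps del: of_real_power)
lemma op_p11_p22: "A (T G2 G2 x) = T G2 G2 (A x)"
  using rep_rel[OF _ _ rel_p11_p22[OF q_nonzero], of x] by (simp add: rep_simps)
lemma op_p11_p33: "A (T G3 G3 x) = T G3 G3 (A x)"
  using rep_rel[OF _ _ rel_p11_p33[OF q_nonzero], of x] by (simp add: rep_simps)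
lemma op_p11_p23: "A (T G2 G3 x) = T G2 G3 (A x)"
  using rep_rel[OF _ _ rel_p11_p23[OF q_nonzero], of x] by (simp add: rep_simps)
lemma op_p21_p13: "T G2 G1 (T G1 G3 x) = q^2 *\<^sub>R A (T G2 G3 x)"
  using rep_rel[OF _ _ rel_p21_p13[OF q_nonzero], of x] by (simp add: rep_simps del: of_real_power)
lemma op_p11_p12: "A (T G1 G2 x) = q^2 *\<^sub>R T G1 G2 (A x)"
  using rep_rel[OF _ _ rel_p11_p12[OF q_nonzero], of x] by (simp add: rep_simps del: of_real_power)
lemma op_p11_p13: "A (T G1 G3 x) = q^2 *\<^sub>R T G1 G3 (A x)"
  using rep_rel[OF _ _ rel_p11_p13[OF q_nonzero], of x] by (simp add: rep_simps del: of_real_power)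
lemma op_p13_p12: "T G1 G3 (T G1 G2 x) = inverse q *\<^sub>R T G1 G2 (T G1 G3 x)"
  using rep_rel[OF _ _ rel_p13_p12[OF q_nonzero], of x] by (simp add: rep_simps del: of_real_inverse)
lemma op_p13_p21: "T G1 G3 (T G2 G1 x) = inverse q *\<^sub>R A (T G2 G3 x)"
  using rep_rel[OF _ _ rel_p13_p21[OF q_nonzero], of x] by (simp add: rep_simps del: of_real_inverse)
lemma op_p12_p21: "T G1 G2 (T G2 G1 x) = A (T G2 G2 x) - (1 - q^2) *\<^sub>R A (A x)"
  using rep_rel[OF _ _ rel_p12_p21[OF q_nonzero], of x] by (simp add: rep_simps del: of_real_power of_real_diff)
lemma op_p13_p31:
  "T G1 G3 (T G3 G1 x) = A (T G3 G3 x) - (1 - q^2) *\<^sub>R (A (A x) + A (T G2 G2 x) - (1 - q^2) *\<^sub>R A (A x))"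
  using rep_rel[OF _ _ rel_p13_p31[OF q_nonzero], of x] by (simp add: rep_simps del: of_real_power of_real_diff)
lemma op_unit: "x = q^4 *\<^sub>R A x + q^2 *\<^sub>R T G2 G2 x + T G3 G3 x"
  using rep_rel[OF _ _ rel_unit[OF q_nonzero], of x] by (simp add: rep_simps del: of_real_power)

text \<open>From p11 = p11^2 + p12 p21 + p13 p31: <x, A x> = |A x|^2 + |T21 x|^2 + |T31 x|^2.\<close>
lemma A_sqrt_admissible: "sqrt_admissible A"
  unfolding sqrt_admissible_def
proof (intro conjI allI T_bounded_linear)
  fix x
  have "inner x (A x) = inner x (A (A x)) + inner x (T G1 G2 (T G2 G1 x)) + inner x (T G1 G3 (T G3 G1 x))"
    by (subst op_p11_decomp) (simp add: inner_add_right)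
  also have "\<dots> = norm (A x)^2 + norm (T G2 G1 x)^2 + norm (T G3 G1 x)^2"
    by (simp add: T_inner[symmetric] power2_norm_eq_inner)
  finally show "norm (A x)^2 \<le> inner x (A x)" by simp
qed

definition Z1 where "Z1 = op_sqrt A"

lemma Z1_bounded_linear: "bounded_linear Z1"
  unfolding Z1_def by (rule op_sqrt_bounded_linear[OF A_sqrt_admissible])
lemma Z1_linear: "linear Z1"
  by (rule bounded_linear.linear[OF Z1_bounded_linear])
lemma Z1_square: "Z1 (Z1 x) = A x"
  unfolding Z1_def by (rule op_sqrt_square[OF A_sqrt_admissible])
lemma Z1_selfadjoint: "is_adjoint Z1 Z1"
  unfolding Z1_def by (rule op_sqrt_selfadjoint[OF A_sqrt_admissible A_selfadjoint])
lemma Z1_inner: "inner (Z1 x) y = inner x (Z1 y)"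
  using Z1_selfadjoint by (simp add: is_adjoint_def)
lemma Z1_nonneg: "inner x (Z1 x) \<ge> 0"
  unfolding Z1_def by (rule op_sqrt_nonneg[OF A_sqrt_admissible])
lemma Z1_adj: "adj Z1 = Z1"
  by (rule adj_eq[OF Z1_bounded_linear Z1_selfadjoint])

lemma Z1_commute: "bounded_linear C \<Longrightarrow> (\<And>x. A (C x) = C (A x)) \<Longrightarrow> Z1 (C x) = C (Z1 x)"
  unfolding Z1_def by (rule op_sqrt_intertwine[OF A_sqrt_admissible A_sqrt_admissible])

lemma Z1_A: "Z1 (A x) = A (Z1 x)"
  by (simp add: Z1_square[symmetric])

lemma Z1_J: "Z1 (J x) = J (Z1 x)"
  using T_cbounded by (intro Z1_commute cstruct_bounded_linear[OF J]) (simp add: cbounded_def)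

lemma Z1_cbounded: "cbounded J Z1"
  unfolding cbounded_def using Z1_bounded_linear Z1_J by simp

lemma Z1_cpositive: "cpositive J Z1"
  unfolding cpositive_def cinner_def using selfadjoint_inner_J[OF J Z1_selfadjoint Z1_J] Z1_nonneg by simp

lemma A_injective: "A x = 0 \<Longrightarrow> x = 0"
  using ker by simp

lemma Z1_injective: "Z1 x = 0 \<Longrightarrow> x = 0"
  using A_injective Z1_square[of x] linear_0[OF Z1_linear] by simp

lemma Z1_dense: "closure (range Z1) = UNIV"
  by (rule selfadjoint_injective_dense_range[OF Z1_bounded_linear Z1_selfadjoint Z1_injective])

lemma A_dense: "closure (range A) = UNIV"
  by (rule selfadjoint_injective_dense_range[OF T_bounded_linear A_selfadjoint A_injective])

lemma Z1_cancel: "(\<And>x. inner (Z1 x) u = 0) \<Longrightarrow> u = 0"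
  by (metis Z1_inner Z1_injective inner_eq_zero_iff)

text \<open>The key estimate for k = 2, 3: by p_k1 p_1k = q^2 p11 p_kk and since Tkk commutes with A,
  |T1k x|^2 = q^2 <Z1 x, Tkk Z1 x> \<le> q^2 K |Z1 x|^2.\<close>
lemma T1k_bound:
  assumes Ek: "\<And>x. T k G1 (T G1 k x) = q^2 *\<^sub>R A (T k k x)"
    and Ck: "\<And>x. A (T k k x) = T k k (A x)"
  shows "\<exists>C\<ge>0. \<forall>x. norm (inverse q *\<^sub>R T G1 k x) \<le> C * norm (Z1 x)"
proof -
  obtain K where K: "\<And>y. norm (T k k y) \<le> norm y * K" "K > 0"
    using bounded_linear.pos_bounded[OF T_bounded_linear[of k k]] by blast
  have comm: "Z1 (T k k y) = T k k (Z1 y)" for y by (rule Z1_commute[OF T_bounded_linear Ck])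
  have "norm (inverse q *\<^sub>R T G1 k x) \<le> sqrt K * norm (Z1 x)" for x
  proof -
    have "norm (T G1 k x)^2 = inner x (T k G1 (T G1 k x))"
      by (simp add: power2_norm_eq_inner T_inner[symmetric])
    also have "\<dots> = q^2 * inner (Z1 x) (T k k (Z1 x))"
      by (simp add: Ek Z1_square[symmetric] comm Z1_inner)
    also have "\<dots> \<le> q^2 * (norm (Z1 x) * (norm (Z1 x) * K))"
    proof (rule mult_left_mono)
      have "inner (Z1 x) (T k k (Z1 x)) \<le> norm (Z1 x) * norm (T k k (Z1 x))" by (rule norm_cauchy_schwarz)
      also have "\<dots> \<le> norm (Z1 x) * (norm (Z1 x) * K)" by (intro mult_left_mono K(1)) simp
      finally show "inner (Z1 x) (T k k (Z1 x)) \<le> norm (Z1 x) * (norm (Z1 x) * K)" .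
    qed simp
    finally have "norm (T G1 k x)^2 \<le> q^2 * (K * norm (Z1 x)^2)"
      by (simp add: power2_eq_square algebra_simps)
    hence "norm (inverse q *\<^sub>R T G1 k x)^2 \<le> (sqrt K * norm (Z1 x))^2"
      using q0 K(2) by (simp add: power_mult_distrib field_simps)
    thus ?thesis by (rule power2_le_imp_le) (use K(2) in simp)
  qed
  thus ?thesis using K(2) by (intro exI[of _ "sqrt K"]) auto
qed

text \<open>Hence q^-1 T1k = Zk Z1 for a bounded complex-linear Zk (extension by continuity).\<close>
lemma factor_through_Z1:
  assumes Ek: "\<And>x. T k G1 (T G1 k x) = q^2 *\<^sub>R A (T k k x)"
    and Ck: "\<And>x. A (T k k x) = T k k (A x)"
  shows "\<exists>W. cbounded J W \<and> (\<forall>x. W (Z1 x) = inverse q *\<^sub>R T G1 k x)"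
proof -
  define R where "R x = inverse q *\<^sub>R T G1 k x" for x
  have blR: "bounded_linear R"
    unfolding R_def by (intro bounded_linear_compose[OF bounded_linear_scaleR_right T_bounded_linear])
  obtain C where "C \<ge> 0" "\<And>x. norm (R x) \<le> C * norm (Z1 x)"
    using T1k_bound[OF Ek Ck] unfolding R_def by blast
  then obtain W where W: "bounded_linear W" "\<And>x. W (Z1 x) = R x"
    using extend_by_continuity[OF Z1_bounded_linear Z1_dense Z1_injective blR] by metis
  have "(\<lambda>y. W (J y)) = (\<lambda>y. J (W y))"
  proof (rule eq_on_dense_range[OF Z1_dense])
    show "bounded_linear (\<lambda>y. W (J y))" "bounded_linear (\<lambda>y. J (W y))"
      by (auto intro: bounded_linear_compose W(1) cstruct_bounded_linear[OF J])
    show "W (J (Z1 x)) = J (W (Z1 x))" for x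
      using T_cbounded by (simp add: Z1_J[symmetric] W(2) R_def cbounded_def cstruct_scale[OF J])
  qed
  hence "cbounded J W" unfolding cbounded_def using W(1) by metis
  thus ?thesis using W(2) R_def by auto
qed

definition Z2 where "Z2 = (SOME W. cbounded J W \<and> (\<forall>x. W (Z1 x) = inverse q *\<^sub>R T G1 G2 x))"
definition Z3 where "Z3 = (SOME W. cbounded J W \<and> (\<forall>x. W (Z1 x) = inverse q *\<^sub>R T G1 G3 x))"

lemma Z2_prop: "cbounded J Z2 \<and> (\<forall>x. Z2 (Z1 x) = inverse q *\<^sub>R T G1 G2 x)"
  unfolding Z2_def by (rule someI_ex[OF factor_through_Z1[OF op_p21_p12 op_p11_p22]])
lemma Z3_prop: "cbounded J Z3 \<and> (\<forall>x. Z3 (Z1 x) = inverse q *\<^sub>R T G1 G3 x)"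
  unfolding Z3_def by (rule someI_ex[OF factor_through_Z1[OF op_p31_p13 op_p11_p33]])

lemma Z2_cbounded: "cbounded J Z2" and Z3_cbounded: "cbounded J Z3"
  using Z2_prop Z3_prop by auto
lemma Z2_bounded_linear: "bounded_linear Z2" and Z3_bounded_linear: "bounded_linear Z3"
  using Z2_cbounded Z3_cbounded cbounded_bounded_linear by auto
lemma Z2_linear: "linear Z2" and Z3_linear: "linear Z3"
  using Z2_bounded_linear Z3_bounded_linear bounded_linear.linear by auto
lemma T12_factor: "T G1 G2 x = q *\<^sub>R Z2 (Z1 x)"
  using Z2_prop q0 by simp
lemma T13_factor: "T G1 G3 x = q *\<^sub>R Z3 (Z1 x)"
  using Z3_prop q0 by simp

abbreviation "Zs2 \<equiv> adj Z2"
abbreviation "Zs3 \<equiv> adj Z3"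

lemma Zs2_bounded_linear: "bounded_linear Zs2"
  by (rule adj_bounded_linear[OF Z2_bounded_linear])
lemma Zs3_bounded_linear: "bounded_linear Zs3"
  by (rule adj_bounded_linear[OF Z3_bounded_linear])

text \<open>Zk^* Zl = Tkl (k, l \<in> {2, 3}), tested against the dense range of Z1.\<close>
lemma adj_Zk_Zl:
  fixes Zk Zl :: "'h \<Rightarrow> 'h"
  assumes blk: "bounded_linear Zk" and bll: "bounded_linear Zl"
    and Tk: "\<And>x. T G1 k x = q *\<^sub>R Zk (Z1 x)" and Tl: "\<And>x. T G1 l x = q *\<^sub>R Zl (Z1 x)"
    and E: "\<And>x. T k G1 (T G1 l x) = q^2 *\<^sub>R A (T k l x)"
    and C: "\<And>x. A (T k l x) = T k l (A x)"
  shows "adj Zk (Zl y) = T k l y"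
proof -
  have comm: "Z1 (T k l y) = T k l (Z1 y)" for y by (rule Z1_commute[OF T_bounded_linear C])
  have "(\<lambda>y. adj Zk (Zl y)) = T k l"
  proof (rule eq_on_dense_range[OF Z1_dense])
    show "bounded_linear (\<lambda>y. adj Zk (Zl y))"
      by (intro bounded_linear_compose[OF adj_bounded_linear[OF blk] bll])
    fix y
    have "inner (Z1 x) (adj Zk (Zl (Z1 y)) - T k l (Z1 y)) = 0" for x
    proof -
      have "inner (Z1 x) (adj Zk (Zl (Z1 y))) = inner (Zk (Z1 x)) (Zl (Z1 y))"
        by (simp add: inner_adj[OF blk])
      also have "\<dots> = inverse q ^2 * inner (T G1 k x) (T G1 l y)"
        using q0 by (simp add: Tk Tl power2_eq_square field_simps)
      also have "\<dots> = inverse q ^2 * inner x (T k G1 (T G1 l y))" by (simp add: T_inner[of G1 k])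
      also have "\<dots> = inner x (A (T k l y))" using q0 by (simp add: E power2_eq_square field_simps)
      also have "\<dots> = inner x (Z1 (Z1 (T k l y)))" by (simp add: Z1_square)
      also have "\<dots> = inner (Z1 x) (T k l (Z1 y))" by (simp only: comm Z1_inner)
      finally show ?thesis by (simp add: inner_diff_right)
    qed
    thus "adj Zk (Zl (Z1 y)) = T k l (Z1 y)" using Z1_cancel by fastforce
  qed (rule T_bounded_linear)
  thus ?thesis by metis
qed

lemma Zs2_Z2: "Zs2 (Z2 y) = T G2 G2 y"
  by (rule adj_Zk_Zl[OF Z2_bounded_linear Z2_bounded_linear T12_factor T12_factor op_p21_p12 op_p11_p22])
lemma Zs3_Z3: "Zs3 (Z3 y) = T G3 G3 y"
  by (rule adj_Zk_Zl[OF Z3_bounded_linear Z3_bounded_linear T13_factor T13_factor op_p31_p13 op_p11_p33])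
lemma Zs2_Z3: "Zs2 (Z3 y) = T G2 G3 y"
  by (rule adj_Zk_Zl[OF Z2_bounded_linear Z3_bounded_linear T12_factor T13_factor op_p21_p13 op_p11_p23])

lemma Zs3_Z2: "Zs3 (Z2 y) = T G3 G2 y"
proof -
  have "is_adjoint (Zs3 \<circ> Z2) (Zs2 \<circ> Z3)"
    by (rule is_adjoint_comp[OF is_adjoint_sym[OF adj_is_adjoint[OF Z2_bounded_linear]]
          adj_is_adjoint[OF Z3_bounded_linear]])
  moreover have "Zs2 \<circ> Z3 = T G2 G3" by (rule ext) (simp add: Zs2_Z3)
  ultimately have "is_adjoint (\<lambda>y. Zs3 (Z2 y)) (T G2 G3)" by (simp add: o_def)
  hence "adj (T G2 G3) = (\<lambda>y. Zs3 (Z2 y))" by (rule adj_eq[OF T_bounded_linear])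
  thus ?thesis using T_adj[of G3 G2] by simp
qed

lemma T21_factor: "T G2 G1 x = q *\<^sub>R Z1 (Zs2 x)"
proof -
  have "is_adjoint (\<lambda>x. q *\<^sub>R Z1 (Zs2 x)) (T G1 G2)"
    unfolding is_adjoint_def by (simp add: T12_factor Z1_inner adj_inner[OF Z2_bounded_linear])
  thus ?thesis using T_adj[of G2 G1] adj_eq[OF T_bounded_linear] by simp
qed

lemma T31_factor: "T G3 G1 x = q *\<^sub>R Z1 (Zs3 x)"
proof -
  have "is_adjoint (\<lambda>x. q *\<^sub>R Z1 (Zs3 x)) (T G1 G3)"
    unfolding is_adjoint_def by (simp add: T13_factor Z1_inner adj_inner[OF Z3_bounded_linear])
  thus ?thesis using T_adj[of G3 G1] adj_eq[OF T_bounded_linear] by simp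
qed

lemma A_Zk:
  fixes Zk :: "'h \<Rightarrow> 'h"
  assumes blk: "bounded_linear Zk" and Tk: "\<And>x. T G1 k x = q *\<^sub>R Zk (Z1 x)"
    and E: "\<And>x. A (T G1 k x) = q^2 *\<^sub>R T G1 k (A x)"
  shows "A (Zk x) = q^2 *\<^sub>R Zk (A x)"
proof -
  have "(\<lambda>x. A (Zk x)) = (\<lambda>x. q^2 *\<^sub>R Zk (A x))"
  proof (rule eq_on_dense_range[OF Z1_dense])
    show "bounded_linear (\<lambda>x. A (Zk x))" "bounded_linear (\<lambda>x. q^2 *\<^sub>R Zk (A x))"
      by (auto intro!: bounded_linear_compose[OF bounded_linear_scaleR_right]
          bounded_linear_compose[OF blk] bounded_linear_compose[OF T_bounded_linear] T_bounded_linear blk)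
    fix x
    have "A (Zk (Z1 x)) = inverse q *\<^sub>R A (T G1 k x)"
      using q0 by (simp add: Tk linear_scale[OF T_linear])
    also have "\<dots> = inverse q *\<^sub>R q^2 *\<^sub>R T G1 k (A x)" by (simp add: E)
    also have "\<dots> = q^2 *\<^sub>R Zk (Z1 (A x))" using q0 by (simp add: Tk power2_eq_square)
    also have "\<dots> = q^2 *\<^sub>R Zk (A (Z1 x))" by (simp add: Z1_A)
    finally show "A (Zk (Z1 x)) = q^2 *\<^sub>R Zk (A (Z1 x))" .
  qed
  thus ?thesis by metis
qed

lemma A_Z2: "A (Z2 x) = q^2 *\<^sub>R Z2 (A x)"
  by (rule A_Zk[OF Z2_bounded_linear T12_factor op_p11_p12])
lemma A_Z3: "A (Z3 x) = q^2 *\<^sub>R Z3 (A x)"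
  by (rule A_Zk[OF Z3_bounded_linear T13_factor op_p11_p13])

lemma A_scaled_admissible: "sqrt_admissible (\<lambda>x. q^2 *\<^sub>R A x)"
  unfolding sqrt_admissible_def
proof (intro conjI allI)
  show "bounded_linear (\<lambda>x. q^2 *\<^sub>R A x)"
    by (intro bounded_linear_compose[OF bounded_linear_scaleR_right T_bounded_linear])
  fix x
  have q2: "q^2 \<le> 1" using q0 q1 by (simp add: power_le_one)
  have "norm (q^2 *\<^sub>R A x)^2 = q^2 * (q^2 * norm (A x)^2)" by (simp add: power_mult_distrib)
  also have "\<dots> \<le> q^2 * (1 * norm (A x)^2)" using q2 by (intro mult_left_mono mult_right_mono) auto
  also have "\<dots> \<le> q^2 * inner x (A x)"
    using A_sqrt_admissible by (simp add: sqrt_admissible_def mult_left_mono)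
  finally show "norm (q^2 *\<^sub>R A x)^2 \<le> inner x (q^2 *\<^sub>R A x)" by simp
qed

text \<open>By uniqueness of positive square roots, sqrt(q^2 A) = q Z1.\<close>
lemma sqrt_scaled_A: "op_sqrt (\<lambda>x. q^2 *\<^sub>R A x) = (\<lambda>x. q *\<^sub>R Z1 x)"
proof (rule sqrt_unique)
  let ?A' = "\<lambda>x. q^2 *\<^sub>R A x"
  note adm = A_scaled_admissible
  show "bounded_linear (op_sqrt ?A')" by (rule op_sqrt_bounded_linear[OF adm])
  show "bounded_linear (\<lambda>x. q *\<^sub>R Z1 x)"
    by (intro bounded_linear_compose[OF bounded_linear_scaleR_right Z1_bounded_linear])
  show "is_adjoint (op_sqrt ?A') (op_sqrt ?A')"
    using A_selfadjoint by (intro op_sqrt_selfadjoint[OF adm]) (simp add: is_adjoint_def)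
  show "is_adjoint (\<lambda>x. q *\<^sub>R Z1 x) (\<lambda>x. q *\<^sub>R Z1 x)" using Z1_selfadjoint by (simp add: is_adjoint_def)
  show "inner x (op_sqrt ?A' x) \<ge> 0" for x by (rule op_sqrt_nonneg[OF adm])
  show "inner x (q *\<^sub>R Z1 x) \<ge> 0" for x using Z1_nonneg q0 by simp
  show "op_sqrt ?A' (q *\<^sub>R Z1 x) = q *\<^sub>R Z1 (op_sqrt ?A' x)" for x
    using op_sqrt_intertwine[OF adm adm Z1_bounded_linear, of x]
      linear_scale[OF bounded_linear.linear[OF op_sqrt_bounded_linear[OF adm]]]
    by (simp add: Z1_A linear_scale[OF Z1_linear])
  show "op_sqrt ?A' (op_sqrt ?A' x) = q *\<^sub>R Z1 (q *\<^sub>R Z1 x)" for x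
    using op_sqrt_square[OF adm, of x] by (simp add: linear_scale[OF Z1_linear] Z1_square power2_eq_square)
qed

text \<open>Z1 Zk = q Zk Z1: Zk intertwines A with q^2 A, hence sqrt(A) with sqrt(q^2 A) = q Z1.\<close>
lemma Z1_Zk:
  fixes Zk :: "'h \<Rightarrow> 'h"
  assumes blk: "bounded_linear Zk" and AZ: "\<And>x. A (Zk x) = q^2 *\<^sub>R Zk (A x)"
  shows "Z1 (Zk x) = q *\<^sub>R Zk (Z1 x)"
  using op_sqrt_intertwine[OF A_sqrt_admissible A_scaled_admissible blk, of x]
  by (simp add: Z1_def[symmetric] sqrt_scaled_A AZ linear_scale[OF bounded_linear.linear[OF blk]])

lemma Z1_Z2: "Z1 (Z2 x) = q *\<^sub>R Z2 (Z1 x)"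
  by (rule Z1_Zk[OF Z2_bounded_linear A_Z2])
lemma Z1_Z3: "Z1 (Z3 x) = q *\<^sub>R Z3 (Z1 x)"
  by (rule Z1_Zk[OF Z3_bounded_linear A_Z3])

text \<open>Z2 Z3 = q Z3 Z2, from p13 p12 = q^-1 p12 p13, cancelling A on the right.\<close>
lemma Z2_Z3: "Z2 (Z3 x) = q *\<^sub>R Z3 (Z2 x)"
proof -
  have "(\<lambda>x. Z2 (Z3 x)) = (\<lambda>x. q *\<^sub>R Z3 (Z2 x))"
  proof (rule eq_on_dense_range[OF A_dense])
    show "bounded_linear (\<lambda>x. Z2 (Z3 x))" "bounded_linear (\<lambda>x. q *\<^sub>R Z3 (Z2 x))"
      by (auto intro!: bounded_linear_compose[OF bounded_linear_scaleR_right]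
          bounded_linear_compose[OF Z2_bounded_linear] bounded_linear_compose[OF Z3_bounded_linear]
          Z2_bounded_linear Z3_bounded_linear)
    fix x
    have "T G1 G3 (T G1 G2 x) = q^3 *\<^sub>R Z3 (Z2 (A x))"
      by (simp add: T12_factor T13_factor linear_scale[OF Z1_linear] linear_scale[OF Z2_linear]
          linear_scale[OF Z3_linear] Z1_Z2 Z1_square power3_eq_cube)
    moreover have "T G1 G2 (T G1 G3 x) = q^3 *\<^sub>R Z2 (Z3 (A x))"
      by (simp add: T12_factor T13_factor linear_scale[OF Z1_linear] linear_scale[OF Z2_linear]
          linear_scale[OF Z3_linear] Z1_Z3 Z1_square power3_eq_cube)
    ultimately have "q^2 *\<^sub>R Z2 (Z3 (A x)) = (q^2 * q) *\<^sub>R Z3 (Z2 (A x))"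
      using op_p13_p12[of x] q0 by (simp add: power3_eq_cube power2_eq_square field_simps)
    thus "Z2 (Z3 (A x)) = q *\<^sub>R Z3 (Z2 (A x))" by (rule scaleR_cancel_factor) (use q0 in simp)
  qed
  thus ?thesis by metis
qed

lemma Zs2_A: "Zs2 (A x) = q^2 *\<^sub>R A (Zs2 x)"
  using adj_swap[OF T_bounded_linear Z2_bounded_linear T_bounded_linear Z2_bounded_linear A_Z2, of x]
  by (simp add: T_adj[symmetric])
lemma Zs3_A: "Zs3 (A x) = q^2 *\<^sub>R A (Zs3 x)"
  using adj_swap[OF T_bounded_linear Z3_bounded_linear T_bounded_linear Z3_bounded_linear A_Z3, of x]
  by (simp add: T_adj[symmetric])

lemma Zs2_Z1: "Zs2 (Z1 x) = q *\<^sub>R Z1 (Zs2 x)"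
  using adj_swap[OF Z1_bounded_linear Z2_bounded_linear Z1_bounded_linear Z2_bounded_linear Z1_Z2, of x]
  by (simp add: Z1_adj)
lemma Zs3_Z1: "Zs3 (Z1 x) = q *\<^sub>R Z1 (Zs3 x)"
  using adj_swap[OF Z1_bounded_linear Z3_bounded_linear Z1_bounded_linear Z3_bounded_linear Z1_Z3, of x]
  by (simp add: Z1_adj)

text \<open>Z2^* Z3 = q Z3 Z2^*, from p13 p21 = q^-1 p11 p23, cancelling A on the right.\<close>
lemma Zs2_Z3_commute: "Zs2 (Z3 x) = q *\<^sub>R Z3 (Zs2 x)"
proof -
  have "(\<lambda>x. Zs2 (Z3 x)) = (\<lambda>x. q *\<^sub>R Z3 (Zs2 x))"
  proof (rule eq_on_dense_range[OF A_dense])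
    show "bounded_linear (\<lambda>x. Zs2 (Z3 x))" "bounded_linear (\<lambda>x. q *\<^sub>R Z3 (Zs2 x))"
      by (auto intro!: bounded_linear_compose[OF bounded_linear_scaleR_right]
          bounded_linear_compose[OF Zs2_bounded_linear] bounded_linear_compose[OF Z3_bounded_linear]
          Zs2_bounded_linear Z3_bounded_linear)
    fix x
    have "T G1 G3 (T G2 G1 x) = Z3 (Zs2 (A x))"
      by (simp add: T21_factor T13_factor linear_scale[OF Z1_linear] linear_scale[OF Z3_linear]
          Z1_square Zs2_A power2_eq_square)
    moreover have "T G1 G3 (T G2 G1 x) = inverse q *\<^sub>R Zs2 (Z3 (A x))"
      by (simp add: op_p13_p21 op_p11_p23 Zs2_Z3)
    ultimately have "inverse q *\<^sub>R Zs2 (Z3 (A x)) = Z3 (Zs2 (A x))" by simp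
    thus "Zs2 (Z3 (A x)) = q *\<^sub>R Z3 (Zs2 (A x))" by (rule inverse_scaleR_eq) (use q0 in simp)
  qed
  thus ?thesis by metis
qed

lemma Zs3_Z2_commute: "Zs3 (Z2 x) = q *\<^sub>R Z2 (Zs3 x)"
  using adj_swap[OF Zs2_bounded_linear Z3_bounded_linear Zs2_bounded_linear Z3_bounded_linear Zs2_Z3_commute, of x]
  by (simp add: adj_adj[OF Z2_bounded_linear])

text \<open>Z2 Z2^* = T22 - (1 - q^2) A, from p12 p21 = p11 p22 - (1 - q^2) p11^2.\<close>
lemma Z2_Zs2: "Z2 (Zs2 x) = T G2 G2 x - (1 - q^2) *\<^sub>R A x"
proof -
  have "(\<lambda>x. Z2 (Zs2 x)) = (\<lambda>x. T G2 G2 x - (1 - q^2) *\<^sub>R A x)"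
  proof (rule eq_on_dense_range[OF A_dense])
    show "bounded_linear (\<lambda>x. Z2 (Zs2 x))" "bounded_linear (\<lambda>x. T G2 G2 x - (1 - q^2) *\<^sub>R A x)"
      by (auto intro!: bounded_linear_sub bounded_linear_compose[OF bounded_linear_scaleR_right]
          bounded_linear_compose[OF Z2_bounded_linear] T_bounded_linear Zs2_bounded_linear)
    fix x
    have "T G1 G2 (T G2 G1 x) = Z2 (Zs2 (A x))"
      by (simp add: T21_factor T12_factor linear_scale[OF Z1_linear] linear_scale[OF Z2_linear]
          Z1_square Zs2_A power2_eq_square)
    thus "Z2 (Zs2 (A x)) = T G2 G2 (A x) - (1 - q^2) *\<^sub>R A (A x)"
      using op_p12_p21[of x] by (simp add: op_p11_p22)
  qed
  thus ?thesis by metis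
qed

text \<open>Z3 Z3^* = T33 - (1 - q^2)(A + Z2 Z2^*), from the relation for p13 p31.\<close>
lemma Z3_Zs3: "Z3 (Zs3 x) = T G3 G3 x - (1 - q^2) *\<^sub>R (A x + T G2 G2 x - (1 - q^2) *\<^sub>R A x)"
proof -
  have "(\<lambda>x. Z3 (Zs3 x)) = (\<lambda>x. T G3 G3 x - (1 - q^2) *\<^sub>R (A x + T G2 G2 x - (1 - q^2) *\<^sub>R A x))"
  proof (rule eq_on_dense_range[OF A_dense])
    show "bounded_linear (\<lambda>x. Z3 (Zs3 x))"
      "bounded_linear (\<lambda>x. T G3 G3 x - (1 - q^2) *\<^sub>R (A x + T G2 G2 x - (1 - q^2) *\<^sub>R A x))"
      by (auto intro!: bounded_linear_sub bounded_linear_add bounded_linear_compose[OF bounded_linear_scaleR_right]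
          bounded_linear_compose[OF Z3_bounded_linear] T_bounded_linear Zs3_bounded_linear)
    fix x
    have "T G1 G3 (T G3 G1 x) = Z3 (Zs3 (A x))"
      by (simp add: T31_factor T13_factor linear_scale[OF Z1_linear] linear_scale[OF Z3_linear]
          Z1_square Zs3_A power2_eq_square)
    thus "Z3 (Zs3 (A x)) = T G3 G3 (A x) - (1 - q^2) *\<^sub>R (A (A x) + T G2 G2 (A x) - (1 - q^2) *\<^sub>R A (A x))"
      using op_p13_p31[of x] by (simp add: op_p11_p22 op_p11_p33)
  qed
  thus ?thesis by metis
qed

text \<open>Z1 Z1^* + Z2 Z2^* + Z3 Z3^* = q^4 T11 + q^2 T22 + T33 = 1.\<close>
lemma Z_sphere: "Z1 (Z1 x) + Z2 (Zs2 x) + Z3 (Zs3 x) = x"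
proof -
  have "Z1 (Z1 x) + Z2 (Zs2 x) + Z3 (Zs3 x) = q^4 *\<^sub>R A x + q^2 *\<^sub>R T G2 G2 x + T G3 G3 x"
    by (simp add: Z1_square Z2_Zs2 Z3_Zs3 algebra_simps power2_eq_square power4_eq_xxxx)
  thus ?thesis using op_unit[of x] by simp
qed

definition Zf :: "gen \<Rightarrow> 'h \<Rightarrow> 'h" where
  "Zf i = (case i of G1 \<Rightarrow> Z1 | G2 \<Rightarrow> Z2 | G3 \<Rightarrow> Z3)"
definition Zsf :: "gen \<Rightarrow> 'h \<Rightarrow> 'h" where
  "Zsf i = adj (Zf i)"

lemma Zf_simps [simp]: "Zf G1 = Z1" "Zf G2 = Z2" "Zf G3 = Z3"
  by (simp_all add: Zf_def)
lemma Zsf_simps [simp]: "Zsf G1 = Z1" "Zsf G2 = Zs2" "Zsf G3 = Zs3"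
  by (simp_all add: Zsf_def Z1_adj)

lemma Zf_family: "op_family J Zf Zsf"
proof
  show "cbounded J (Zf i)" for i by (cases i) (simp_all add: Z1_cbounded Z2_cbounded Z3_cbounded)
  thus "is_adjoint (Zsf i) (Zf i)" for i
    unfolding Zsf_def by (rule adj_is_adjoint[OF cbounded_bounded_linear])
qed (rule J)

lemma Zf_S5_relations: "S5_relations q Zf Zsf"
  unfolding S5_relations_def
proof (intro conjI allI impI)
  show "Zf i (Zf j x) = q *\<^sub>R Zf j (Zf i x)" if "gnum i < gnum j" for i j x
    using that by (cases i; cases j) (simp_all add: Z1_Z2 Z1_Z3 Z2_Z3)
  show "Zsf i (Zf j x) = q *\<^sub>R Zf j (Zsf i x)" if "i \<noteq> j" for i j x
    using that by (cases i; cases j) (simp_all add: Z1_Z2 Z1_Z3 Zs2_Z1 Zs3_Z1 Zs2_Z3_commute Zs3_Z2_commute)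
  show "Zf G1 (Zsf G1 x) + Zf G2 (Zsf G2 x) + Zf G3 (Zsf G3 x) = x" for x
    using Z_sphere by simp
qed (simp_all add: Zs2_Z2 Z2_Zs2 Zs3_Z3 Z3_Zs3 Z1_square)

abbreviation "\<pi>t \<equiv> poly_op J Zf Zsf"

lemma lift_star_rep: "star_rep J q polys \<pi>t"
  by (rule op_family.poly_op_star_rep[OF Zf_family Zf_S5_relations])

lemma lift_p: "\<pi>t (p i j) = T i j"
proof
  fix x
  have "\<pi>t (p i j) x = Zsf i (Zf j x)"
    by (simp add: p_def op_family.poly_op_mon[OF Zf_family] letter_op_def)
  also have "\<dots> = T i j x"
    by (cases i; cases j) (simp_all add: Z1_square Z1_Z2 Z1_Z3 T12_factor T13_factor Zs2_Z1 Zs3_Z1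
        T21_factor T31_factor Zs2_Z2 Zs3_Z3 Zs2_Z3 Zs3_Z2)
  finally show "\<pi>t (p i j) x = T i j x" .
qed

text \<open>The lift restricts to pi on A(CP^2_q): both are *-homomorphisms agreeing on the generators.\<close>
lemma lift_restricts: "f \<in> CP2_alg \<Longrightarrow> \<pi>t f = \<pi> f"
proof (induction rule: CP2_alg.induct)
  case one thus ?case by (simp add: op_family.poly_op_gens[OF Zf_family] rep_one id_def)
next
  case (gen i j) thus ?case by (rule lift_p)
next
  case (add f g) thus ?case
    using lift_star_rep CP2_fsupp rep_add by (auto simp: star_rep_def polys_def)
next
  case (sc f c) thus ?case
    using lift_star_rep CP2_fsupp rep_sc by (auto simp: star_rep_def polys_def)
next
  case (mul f g) thus ?case
    using lift_star_rep CP2_fsupp rep_mul by (auto simp: star_rep_def polys_def)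
next
  case (star f) thus ?case
    using lift_star_rep CP2_fsupp rep_star cadj_eq_adj[OF J rep_cbounded] by (auto simp: star_rep_def polys_def)
qed

text \<open>Every subspace invariant under the lift is invariant under pi, so irreducibility passes up.\<close>
lemma lift_irreducible:
  assumes irr: "irreducible_rep J CP2_alg \<pi>" shows "irreducible_rep J polys \<pi>t"
  unfolding irreducible_rep_def
proof (intro allI impI)
  fix V assume V: "closed V \<and> subspace V \<and> J ` V \<subseteq> V \<and> (\<forall>f\<in>polys. \<pi>t f ` V \<subseteq> V)"
  have "\<forall>f\<in>CP2_alg. \<pi> f ` V \<subseteq> V"
    using V lift_restricts CP2_fsupp by (metis mem_Collect_eq polys_def)
  thus "V = {0} \<or> V = UNIV" using irr V unfolding irreducible_rep_def by blast
qed

end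

theorem lemmaD1:
  fixes q :: real
    and J :: "'h::{real_inner, complete_space} \<Rightarrow> 'h"
    and \<pi> :: "poly \<Rightarrow> 'h \<Rightarrow> 'h"
  assumes "0 < q" and "q < 1"
    and "cstruct J"
    and "star_rep J q CP2_alg \<pi>"
    and "\<forall>x. \<pi> (p G1 G1) x = 0 \<longrightarrow> x = 0"
  shows "\<exists>Z1 Z2 Z3 \<pi>t.
     cbounded J Z1 \<and> cbounded J Z2 \<and> cbounded J Z3
   \<and> cpositive J Z1 \<and> (\<forall>x. Z1 x = 0 \<longrightarrow> x = 0)
   \<and> \<pi> (p G1 G1) = Z1 \<circ> Z1
   \<and> \<pi> (p G1 G2) = (\<lambda>x. q *\<^sub>R Z2 (Z1 x))
   \<and> \<pi> (p G1 G3) = (\<lambda>x. q *\<^sub>R Z3 (Z1 x))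
   \<and> \<pi> (p G2 G1) = (\<lambda>x. q *\<^sub>R Z1 (cadj J Z2 x))
   \<and> \<pi> (p G2 G2) = cadj J Z2 \<circ> Z2
   \<and> \<pi> (p G2 G3) = cadj J Z2 \<circ> Z3
   \<and> \<pi> (p G3 G1) = (\<lambda>x. q *\<^sub>R Z1 (cadj J Z3 x))
   \<and> \<pi> (p G3 G2) = cadj J Z3 \<circ> Z2
   \<and> \<pi> (p G3 G3) = cadj J Z3 \<circ> Z3
   \<and> star_rep J q polys \<pi>t
   \<and> \<pi>t (z G1) = Z1 \<and> \<pi>t (z G2) = Z2 \<and> \<pi>t (z G3) = Z3
   \<and> (\<forall>i j. \<pi>t (pmul (zs i) (z j)) = \<pi> (p i j))
   \<and> (\<forall>f\<in>CP2_alg. \<pi>t f = \<pi> f)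
   \<and> (irreducible_rep J CP2_alg \<pi> \<longrightarrow> irreducible_rep J polys \<pi>t)"
proof -
  interpret cp2_rep q J \<pi> by unfold_locales (use assms in auto)
  have c2: "cadj J Z2 = Zs2" and c3: "cadj J Z3 = Zs3"
    by (simp_all add: cadj_eq_adj[OF J] Z2_cbounded Z3_cbounded)
  show ?thesis
  proof (intro exI conjI)
    show "cbounded J Z1" "cbounded J Z2" "cbounded J Z3" "cpositive J Z1"
      by (fact Z1_cbounded Z2_cbounded Z3_cbounded Z1_cpositive)+
    show "\<forall>x. Z1 x = 0 \<longrightarrow> x = 0" using Z1_injective by blast
    show "star_rep J q polys \<pi>t" by (fact lift_star_rep)
    show "\<pi>t (z G1) = Z1" "\<pi>t (z G2) = Z2" "\<pi>t (z G3) = Z3"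
      by (simp_all add: op_family.poly_op_gens[OF Zf_family])
    show "\<forall>i j. \<pi>t (pmul (zs i) (z j)) = T i j" by (simp add: pmul_zs_z lift_p)
    show "\<forall>f\<in>CP2_alg. \<pi>t f = \<pi> f" using lift_restricts by blast
    show "irreducible_rep J CP2_alg \<pi> \<longrightarrow> irreducible_rep J polys \<pi>t" using lift_irreducible by blast
  qed (simp_all add: fun_eq_iff c2 c3 Z1_square T12_factor T13_factor T21_factor T31_factor
      Zs2_Z2 Zs2_Z3 Zs3_Z2 Zs3_Z3)
qed

end
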